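(* Let $m,n\ge1$ and let $\mathcal M_{n,m}$ be the set of Dyck paths of semilength $nm$ in which every maximal run of consecutive up-steps has length divisible by $m$, ordered by the Tamari order (the $m$-Tamari lattice). Then the map $[P,Q]\mapsto \mathrm{IP}(P,Q)$ restricts to a bijection from the set of pairs $P\le Q$ with $P,Q\in\mathcal M_{n,m}$ onto the set of Tamari interval-posets $\triangleleft$ of size $nm$ satisfying, for every $1\le i\le n$, $im\triangleleft im-1\triangleleft \cdots\triangleleft im-(m-1)$.
   Context: A Dyck path of semilength $N$ is a word in up-steps $U$ and down-steps $D$ with $N$ of each, every prefix having at least as many $U$ as $D$; each up-step is matched with the first later down-step returning to its starting height. Tamari order: a rotation takes a down-step $D$ immediately followed by an up-step, lets $W$ be the shortest nonempty factor starting right after this $D$ that is itself a Dyck path, and replaces $DW$ by $WD$; the Tamari order is the reflexive–transitive closure. Label up-steps $1,\dots,N$ left to right. $\mathrm{dec}(P)=\{(j,i): j\ne i,\ \text{up-step } j \text{ lies strictly between up-step } i \text{ and its matching down-step}\}$; $\mathrm{inc}(Q)$ is the transitive closure of the relation containing $(i,k)$ whenever $k$ is the first up-step after the down-step matched with $i$. $\mathrm{IP}(P,Q)$ is the reflexive transitive closure of $\mathrm{dec}(P)\cup\mathrm{inc}(Q)$, written $x\triangleleft y$. A Tamari interval-poset of size $N$ is a partial order $\triangleleft$ on $[N]$ such that for all $a<b<c$: $a\triangleleft c\Rightarrow b\triangleleft c$ and $c\triangleleft a\Rightarrow b\triangleleft a$. *)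

theory Defs
  imports Main
begin

text \<open>Dyck paths are boolean lists: True = up-step U, False = down-step D.\<close>

definition height :: "bool list \<Rightarrow> nat \<Rightarrow> int" where
  "height w k = int (count_list (take k w) True) - int (count_list (take k w) False)"

definition dyck :: "nat \<Rightarrow> bool list \<Rightarrow> bool" where
  "dyck N w \<longleftrightarrow> length w = 2 * N \<and> count_list w True = N \<and>
     (\<forall>k \<le> length w. height w k \<ge> 0)"

definition balanced :: "bool list \<Rightarrow> bool" where
  "balanced w \<longleftrightarrow> dyck (length w div 2) w \<and> even (length w)"

definition rotation :: "bool list \<Rightarrow> bool list \<Rightarrow> bool" where
  "rotation P P' \<longleftrightarrow> (\<exists>xs W zs. P = xs @ [False] @ W @ zs \<and> W \<noteq> [] \<and> hd W = True \<and>
      balanced W \<and> (\<forall>k. 0 < k \<and> k < length W \<longrightarrow> \<not> balanced (take k W)) \<and>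
      P' = xs @ W @ [False] @ zs)"

definition tamari_le :: "bool list \<Rightarrow> bool list \<Rightarrow> bool" where
  "tamari_le P Q \<longleftrightarrow> (P, Q) \<in> {(a, b). rotation a b}\<^sup>*"

text \<open>Position (0-indexed) in w of up-step number i (up-steps labelled 1..N left to right).\<close>
definition up_pos :: "bool list \<Rightarrow> nat \<Rightarrow> nat" where
  "up_pos w i = (THE p. p < length w \<and> w ! p \<and> count_list (take p w) True = i - 1)"

definition match_pos :: "bool list \<Rightarrow> nat \<Rightarrow> nat" where
  "match_pos w p = (LEAST q. p < q \<and> q < length w \<and> \<not> w ! q \<and> height w (Suc q) = height w p)"

definition dec :: "nat \<Rightarrow> bool list \<Rightarrow> (nat \<times> nat) set" where
  "dec N P = {(j, i). j \<in> {1..N} \<and> i \<in> {1..N} \<and> j \<noteq> i \<and>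
      up_pos P i < up_pos P j \<and> up_pos P j < match_pos P (up_pos P i)}"

definition inc_base :: "nat \<Rightarrow> bool list \<Rightarrow> (nat \<times> nat) set" where
  "inc_base N Q = {(i, k). i \<in> {1..N} \<and> k \<in> {1..N} \<and>
      match_pos Q (up_pos Q i) < up_pos Q k \<and>
      (\<forall>l \<in> {1..N}. match_pos Q (up_pos Q i) < up_pos Q l \<longrightarrow> up_pos Q k \<le> up_pos Q l)}"

definition inc :: "nat \<Rightarrow> bool list \<Rightarrow> (nat \<times> nat) set" where
  "inc N Q = (inc_base N Q)\<^sup>+"

definition IP :: "nat \<Rightarrow> bool list \<Rightarrow> bool list \<Rightarrow> (nat \<times> nat) set" where
  "IP N P Q = Id_on {1..N} \<union> (dec N P \<union> inc N Q)\<^sup>+"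

definition interval_poset :: "nat \<Rightarrow> (nat \<times> nat) set \<Rightarrow> bool" where
  "interval_poset N R \<longleftrightarrow> R \<subseteq> {1..N} \<times> {1..N} \<and>
     (\<forall>x \<in> {1..N}. (x, x) \<in> R) \<and> trans R \<and> antisym R \<and>
     (\<forall>a b c. 1 \<le> a \<and> a < b \<and> b < c \<and> c \<le> N \<longrightarrow>
        ((a, c) \<in> R \<longrightarrow> (b, c) \<in> R) \<and> ((c, a) \<in> R \<longrightarrow> (b, a) \<in> R))"

definition runs_div :: "nat \<Rightarrow> bool list \<Rightarrow> bool" where
  "runs_div m w \<longleftrightarrow> (\<forall>a b. a \<le> b \<and> b \<le> length w \<and> (\<forall>k. a \<le> k \<and> k < b \<longrightarrow> w ! k) \<and>
      (a = 0 \<or> \<not> w ! (a - 1)) \<and> (b = length w \<or> \<not> w ! b) \<longrightarrow> m dvd (b - a))"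

definition mpaths :: "nat \<Rightarrow> nat \<Rightarrow> bool list set" where
  "mpaths n m = {w. dyck (n * m) w \<and> runs_div m w}"

definition chain_cond :: "nat \<Rightarrow> nat \<Rightarrow> (nat \<times> nat) set \<Rightarrow> bool" where
  "chain_cond n m R \<longleftrightarrow> (\<forall>i \<in> {1..n}. \<forall>k. k + 1 < m \<longrightarrow> (i * m - k, i * m - k - 1) \<in> R)"

end

theory Submission
  imports Defs
begin

text \<open>
  Encode a Dyck path \<open>P\<close> of semilength \<open>N\<close> by its vector \<open>E\<^sub>P\<close>, where \<open>E\<^sub>P(i)\<close> is the
  number of up-steps before the down-step matched with up-step \<open>i\<close>. Then
  \<open>dec(P) = {(j, i). i < j \<le> E\<^sub>P(i)}\<close> and \<open>inc(Q)\<close> is generated by the pairs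
  \<open>(i, E\<^sub>Q(i) + 1)\<close>; for \<open>E\<^sub>P \<le> E\<^sub>Q\<close> the union of these two relations with the
  identity is already transitive, so \<open>IP(P, Q)\<close> is that union and determines \<open>E\<^sub>P\<close> and
  \<open>E\<^sub>Q\<close>. Conversely an interval-poset yields such a pair of vectors, read off its
  decreasing and its increasing part.

  A rotation raises \<open>E\<close> at exactly one index, so \<open>P \<le> Q\<close> implies \<open>E\<^sub>P \<le> E\<^sub>Q\<close>; and
  every admissible vector above \<open>E\<^sub>P\<close> is reached from \<open>P\<close> by rotations, always rotating
  just before the up-step that follows the arch of the largest index where \<open>E\<^sub>P\<close> is still
  too small.

  Finally, all runs of up-steps of \<open>P\<close> have length divisible by \<open>m\<close> iff
  \<open>l < E\<^sub>P(l)\<close> for every \<open>l\<close> not divisible by \<open>m\<close>, i.e. iff \<open>l + 1 \<triangleleft> l\<close> for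
  these \<open>l\<close>, which is the chain condition. This property passes from \<open>P\<close> to every
  \<open>Q \<ge> P\<close>, so only the lower path has to be checked.
\<close>

definition ups :: "bool list \<Rightarrow> nat \<Rightarrow> nat" where
  "ups w k = count_list (take k w) True"

lemma count_list_True_False: "count_list xs True + count_list xs False = length (xs::bool list)"
  by (induction xs) auto

lemma ups_Suc: "k < length w \<Longrightarrow> ups w (Suc k) = ups w k + (if w!k then 1 else 0)"
  by (simp add: ups_def take_Suc_conv_app_nth)

lemma ups_mono: "k \<le> k' \<Longrightarrow> ups w k \<le> ups w k'"
proof -
  assume "k \<le> k'"
  then obtain d where "k' = k + d" by (metis le_add_diff_inverse)
  then show ?thesis by (simp add: ups_def take_add)
qed

lemma ups_le: "ups w k \<le> k"
proof -
  have "count_list (take k w) True \<le> length (take k w)" by (rule count_le_length)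
  then show ?thesis unfolding ups_def by simp
qed

lemma ups_beyond_length: "k \<ge> length w \<Longrightarrow> ups w k = count_list w True"
  by (simp add: ups_def)

lemma height_ups: "k \<le> length w \<Longrightarrow> height w k = int (ups w k) - int (k - ups w k)"
proof -
  assume k: "k \<le> length w"
  have "count_list (take k w) True + count_list (take k w) False = k"
    using count_list_True_False[of "take k w"] k by simp
  then show ?thesis unfolding height_def ups_def by simp
qed

lemma height_Suc: "k < length w \<Longrightarrow> height w (Suc k) = height w k + (if w!k then 1 else -1)"
  by (simp add: height_def take_Suc_conv_app_nth)

lemma height_0[simp]: "height w 0 = 0"
  by (simp add: height_def)

lemma dyck_length: "dyck N w \<Longrightarrow> length w = 2 * N"
  by (simp add: dyck_def)
lemma dyck_count_True: "dyck N w \<Longrightarrow> count_list w True = N"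
  by (simp add: dyck_def)
lemma dyck_height_nonneg: "dyck N w \<Longrightarrow> k \<le> length w \<Longrightarrow> height w k \<ge> 0"
  by (simp add: dyck_def)
lemma dyck_height_end: "dyck N w \<Longrightarrow> height w (length w) = 0"
proof -
  assume d: "dyck N w"
  have "count_list w True + count_list w False = 2 * N" using count_list_True_False[of w] d by (simp add: dyck_def)
  then show ?thesis using d by (simp add: dyck_def height_def)
qed

lemma up_pos_eqI:
  assumes "p < length w" "w ! p"
  shows "up_pos w (Suc (ups w p)) = p"
proof -
  have uniq: "q = p" if "q < length w" "w ! q" "ups w q = ups w p" for q
  proof (rule ccontr)
    assume "q \<noteq> p"
    then consider "q < p" | "p < q" by linarith
    then show False
    proof cases
      case 1
      have "ups w (Suc q) \<le> ups w p" using 1 ups_mono by simp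
      then show False using ups_Suc[of q w] that by simp
    next
      case 2
      have "ups w (Suc p) \<le> ups w q" using 2 ups_mono by simp
      then show False using ups_Suc[of p w] assms that by simp
    qed
  qed
  have "\<And>q. q < length w \<and> w ! q \<and> count_list (take q w) True = Suc (ups w p) - 1 \<Longrightarrow> q = p"
    using uniq unfolding ups_def by simp
  moreover have "p < length w \<and> w ! p \<and> count_list (take p w) True = Suc (ups w p) - 1"
    using assms unfolding ups_def by simp
  ultimately show ?thesis unfolding up_pos_def by (rule the_equality[rotated])
qed

lemma up_pos_exists:
  assumes "1 \<le> i" "i \<le> count_list w True"
  shows "\<exists>p<length w. w ! p \<and> ups w p = i - 1"
proof -
  define p where "p = (LEAST p. i \<le> ups w (Suc p))"
  have ex: "i \<le> ups w (Suc (length w))" using assms ups_beyond_length[of w "Suc (length w)"] by simp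
  have p1: "i \<le> ups w (Suc p)" unfolding p_def by (rule LeastI[where P="\<lambda>p. i \<le> ups w (Suc p)", OF ex])
  have p2: "\<not> i \<le> ups w p"
  proof (cases p)
    case 0 then show ?thesis using assms by (simp add: ups_def)
  next
    case (Suc q)
    have "q < p" using Suc by simp
    then show ?thesis using not_less_Least[of q "\<lambda>p. i \<le> ups w (Suc p)"] Suc unfolding p_def by simp
  qed
  have pl: "p < length w"
  proof (rule ccontr)
    assume "\<not> p < length w"
    then have "ups w p = count_list w True" by (simp add: ups_beyond_length)
    then show False using p2 assms by simp
  qed
  have "ups w (Suc p) = ups w p + (if w!p then 1 else 0)" using ups_Suc pl by simp
  then have "w ! p" "ups w p = i - 1" using p1 p2 by (auto split: if_splits)
  then show ?thesis using pl by blast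
qed

lemma up_pos_props:
  assumes "1 \<le> i" "i \<le> count_list w True"
  shows "up_pos w i < length w" "w ! up_pos w i" "ups w (up_pos w i) = i - 1"
proof -
  obtain p where p: "p < length w" "w ! p" "ups w p = i - 1" using up_pos_exists[OF assms] by blast
  have "up_pos w i = p" using up_pos_eqI[OF p(1,2)] p(3) assms by simp
  then show "up_pos w i < length w" "w ! up_pos w i" "ups w (up_pos w i) = i - 1" using p by auto
qed

lemma up_less_iff_ups:
  assumes "p < length w" "w ! p"
  shows "p < r \<longleftrightarrow> Suc (ups w p) \<le> ups w r"
proof
  assume "p < r"
  then have "ups w (Suc p) \<le> ups w r" by (simp add: ups_mono)
  then show "Suc (ups w p) \<le> ups w r" using ups_Suc[OF assms(1)] assms(2) by simp
next
  assume "Suc (ups w p) \<le> ups w r"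
  then show "p < r" using ups_mono[of r p w] by (meson not_less not_less_eq_eq)
qed

lemma up_pos_strict_mono:
  assumes "1 \<le> i" "i < j" "j \<le> count_list w True"
  shows "up_pos w i < up_pos w j"
proof -
  have "Suc (ups w (up_pos w i)) \<le> ups w (up_pos w j)"
    using up_pos_props[of i w] up_pos_props[of j w] assms by simp
  then show ?thesis using up_less_iff_ups[of "up_pos w i" w] up_pos_props[of i w] assms by simp
qed

lemma height_above_until:
  assumes "p < length w" "w ! p" "p < k" "k \<le> length w"
    and "\<forall>q<k. \<not> (p < q \<and> q < length w \<and> \<not> w ! q \<and> height w (Suc q) = height w p)"
  shows "height w k > height w p"
  using assms(3-5)
proof (induction k)
  case 0 then show ?case by simp
next
  case (Suc k)
  show ?case
  proof (cases "k = p")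
    case True
    then show ?thesis using height_Suc[of p w] assms(1,2) by simp
  next
    case False
    then have kp: "p < k" using Suc.prems by simp
    have IH: "height w k > height w p" using Suc.IH kp Suc.prems by simp
    have kl: "k < length w" using Suc.prems by simp
    show ?thesis
    proof (cases "w ! k")
      case True then show ?thesis using height_Suc[OF kl] IH by simp
    next
      case False
      have "height w (Suc k) \<noteq> height w p" using Suc.prems(3) kp kl False by auto
      then show ?thesis using height_Suc[OF kl] IH False by simp
    qed
  qed
qed

lemma match_pos_props:
  assumes d: "dyck N w" and p: "p < length w" "w ! p"
  shows "p < match_pos w p" "match_pos w p < length w" "\<not> w ! match_pos w p"
    "height w (Suc (match_pos w p)) = height w p"
    "\<And>k. p < k \<Longrightarrow> k \<le> match_pos w p \<Longrightarrow> height w k > height w p"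
proof -
  define Pq where "Pq q \<longleftrightarrow> p < q \<and> q < length w \<and> \<not> w ! q \<and> height w (Suc q) = height w p" for q
  have ex: "\<exists>q. Pq q"
  proof (rule ccontr)
    assume "\<not> (\<exists>q. Pq q)"
    then have "height w (length w) > height w p"
      using height_above_until[OF p _ order.refl] p(1) unfolding Pq_def by blast
    moreover have "height w p \<ge> 0" using dyck_height_nonneg[OF d] p by simp
    ultimately show False using dyck_height_end[OF d] by simp
  qed
  have mq: "match_pos w p = (LEAST q. Pq q)" unfolding match_pos_def Pq_def by simp
  have "Pq (match_pos w p)" unfolding mq by (rule LeastI_ex[OF ex])
  then show "p < match_pos w p" "match_pos w p < length w" "\<not> w ! match_pos w p"
    "height w (Suc (match_pos w p)) = height w p" unfolding Pq_def by auto
  fix k assume k: "p < k" "k \<le> match_pos w p"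
  have "\<forall>q<k. \<not> Pq q" using k(2) not_less_Least[of _ Pq] unfolding mq by fastforce
  then show "height w k > height w p"
    using height_above_until[OF p k(1)] k \<open>match_pos w p < length w\<close> unfolding Pq_def by simp
qed

definition stays_above :: "bool list \<Rightarrow> nat \<Rightarrow> nat \<Rightarrow> bool" where
  "stays_above w p q \<longleftrightarrow> (\<forall>k. p < k \<and> k \<le> q \<longrightarrow> height w p < height w k)"

lemma stays_above_iff_le_match:
  assumes d: "dyck N w" and p: "p < length w" "w ! p" and r: "p < r"
  shows "stays_above w p r \<longleftrightarrow> r \<le> match_pos w p"
proof
  assume a: "stays_above w p r"
  show "r \<le> match_pos w p"
  proof (rule ccontr)
    assume "\<not> r \<le> match_pos w p"
    then have "Suc (match_pos w p) \<le> r" by simp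
    then show False using a match_pos_props[OF d p] unfolding stays_above_def
      by (metis less_Suc_eq less_irrefl order.strict_trans)
  qed
next
  assume "r \<le> match_pos w p"
  then show "stays_above w p r" using match_pos_props(5)[OF d p] unfolding stays_above_def by simp
qed

text \<open>\<open>arch_end P\<close> is the vector \<open>E\<^sub>P\<close>; the bracket vectors are exactly the vectors of this
  form (see \<open>arch_end_bracket_vector\<close> and \<open>tamari_climb_to\<close>).\<close>

definition arch_end :: "bool list \<Rightarrow> nat \<Rightarrow> nat" where
  "arch_end w i = ups w (match_pos w (up_pos w i))"

definition bracket_vector :: "nat \<Rightarrow> (nat \<Rightarrow> nat) \<Rightarrow> bool" where
  "bracket_vector N E \<longleftrightarrow> (\<forall>i\<in>{1..N}. i \<le> E i \<and> E i \<le> N \<and> (\<forall>j. i < j \<and> j \<le> E i \<longrightarrow> E j \<le> E i))"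

definition dec_vec :: "nat \<Rightarrow> (nat \<Rightarrow> nat) \<Rightarrow> (nat \<times> nat) set" where
  "dec_vec N E = {(j, i). i \<in> {1..N} \<and> i < j \<and> j \<le> E i}"

definition inc_base_vec :: "nat \<Rightarrow> (nat \<Rightarrow> nat) \<Rightarrow> (nat \<times> nat) set" where
  "inc_base_vec N E = {(i, k). i \<in> {1..N} \<and> E i < N \<and> k = Suc (E i)}"

definition inc_vec :: "nat \<Rightarrow> (nat \<Rightarrow> nat) \<Rightarrow> (nat \<times> nat) set" where
  "inc_vec N E = (inc_base_vec N E)\<^sup>+"

lemma dyck_up_pos:
  assumes d: "dyck N w" and i: "1 \<le> i" "i \<le> N"
  shows "up_pos w i < length w" "w ! up_pos w i" "ups w (up_pos w i) = i - 1"
  using up_pos_props[of i w] dyck_count_True[OF d] i by auto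

lemma up_pos_less_iff:
  assumes d: "dyck N w" and "i \<in> {1..N}" "j \<in> {1..N}"
  shows "up_pos w i < up_pos w j \<longleftrightarrow> i < j"
  using up_pos_strict_mono[of i j w] up_pos_strict_mono[of j i w] dyck_count_True[OF d] assms
  by (metis atLeastAtMost_iff less_asym' linorder_neqE_nat)

lemma ups_le_dyck: "dyck N w \<Longrightarrow> ups w k \<le> N"
  using ups_mono[of k "max k (length w)" w] ups_beyond_length[of w "max k (length w)"] dyck_count_True[of N w] by simp

lemma arch_end_bounds:
  assumes d: "dyck N w" and i: "1 \<le> i" "i \<le> N"
  shows "i \<le> arch_end w i" "arch_end w i \<le> N"
proof -
  have "up_pos w i < match_pos w (up_pos w i)" using match_pos_props(1)[OF d dyck_up_pos(1,2)[OF d i]] .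
  then have "Suc (ups w (up_pos w i)) \<le> arch_end w i"
    unfolding arch_end_def using up_less_iff_ups dyck_up_pos(1,2)[OF d i] by blast
  then show "i \<le> arch_end w i" using dyck_up_pos(3)[OF d i] i by simp
  show "arch_end w i \<le> N" unfolding arch_end_def by (rule ups_le_dyck[OF d])
qed

lemma up_pos_less_down_iff:
  assumes d: "dyck N w" and j: "1 \<le> j" "j \<le> N" and q: "q < length w" "\<not> w ! q"
  shows "up_pos w j < q \<longleftrightarrow> j \<le> ups w q"
  using up_less_iff_ups[OF dyck_up_pos(1,2)[OF d j]] dyck_up_pos(3)[OF d j] j by simp

lemma down_less_up_pos_iff:
  assumes d: "dyck N w" and j: "1 \<le> j" "j \<le> N" and q: "q < length w" "\<not> w ! q"
  shows "q < up_pos w j \<longleftrightarrow> ups w q < j"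
proof -
  have "up_pos w j \<noteq> q" using dyck_up_pos(2)[OF d j] q by auto
  then show ?thesis using up_pos_less_down_iff[OF assms] by auto
qed

lemma dec_eq_dec_vec:
  assumes d: "dyck N w"
  shows "dec N w = dec_vec N (arch_end w)"
proof (intro set_eqI iffI; clarify)
  fix j i assume a: "(j, i) \<in> dec N w"
  then have ij: "i \<in> {1..N}" "j \<in> {1..N}" "j \<noteq> i" "up_pos w i < up_pos w j"
    "up_pos w j < match_pos w (up_pos w i)" unfolding dec_def by auto
  have "i < j" using up_pos_less_iff[OF d ij(1,2)] ij(4) by simp
  moreover have "j \<le> arch_end w i" unfolding arch_end_def
    using up_pos_less_down_iff[OF d _ _ match_pos_props(2,3)[OF d dyck_up_pos(1,2)[OF d]]] ij by auto
  ultimately show "(j, i) \<in> dec_vec N (arch_end w)" using ij unfolding dec_vec_def by auto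
next
  fix j i assume a: "(j, i) \<in> dec_vec N (arch_end w)"
  then have ij: "i \<in> {1..N}" "i < j" "j \<le> arch_end w i" unfolding dec_vec_def by auto
  have jN: "j \<in> {1..N}" using ij arch_end_bounds[OF d, of i] by auto
  have "up_pos w i < up_pos w j" using up_pos_less_iff[OF d ij(1) jN] ij by simp
  moreover have "up_pos w j < match_pos w (up_pos w i)"
    using up_pos_less_down_iff[OF d _ _ match_pos_props(2,3)[OF d dyck_up_pos(1,2)[OF d]]] ij jN
    unfolding arch_end_def by auto
  ultimately show "(j, i) \<in> dec N w" using ij jN unfolding dec_def by auto
qed

lemma dec_row_iff:
  assumes "dyck N w" "i \<in> {1..N}"
  shows "(j, i) \<in> dec N w \<longleftrightarrow> i < j \<and> j \<le> arch_end w i"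
  using dec_eq_dec_vec[OF assms(1)] assms(2) unfolding dec_vec_def by auto

lemma match_pos_nested:
  assumes d: "dyck N w" and p: "p < length w" "w ! p" and q: "q < length w" "w ! q"
    and pq: "p < q" "q < match_pos w p"
  shows "match_pos w q < match_pos w p"
proof -
  have hq: "height w q > height w p" using match_pos_props(5)[OF d p] pq by simp
  have "stays_above w p (Suc (match_pos w q))"
    unfolding stays_above_def
  proof (intro allI impI)
    fix k assume k: "p < k \<and> k \<le> Suc (match_pos w q)"
    consider "k \<le> q" | "q < k \<and> k \<le> match_pos w q" | "k = Suc (match_pos w q)" using k by linarith
    then show "height w k > height w p"
    proof cases
      case 1 then show ?thesis using match_pos_props(5)[OF d p] k pq by simp
    next
      case 2 then show ?thesis using match_pos_props(5)[OF d q] hq by fastforce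
    next
      case 3 then show ?thesis using match_pos_props(4)[OF d q] hq by simp
    qed
  qed
  then have "Suc (match_pos w q) \<le> match_pos w p"
    using stays_above_iff_le_match[OF d p, of "Suc (match_pos w q)"] match_pos_props(1)[OF d q] pq by simp
  then show ?thesis by simp
qed

lemma arch_end_bracket_vector:
  assumes d: "dyck N w"
  shows "bracket_vector N (arch_end w)"
  unfolding bracket_vector_def
proof (intro ballI conjI allI impI)
  fix i assume i: "i \<in> {1..N}"
  then show "i \<le> arch_end w i" "arch_end w i \<le> N" using arch_end_bounds[OF d] by auto
  fix j assume j: "i < j \<and> j \<le> arch_end w i"
  then have jN: "j \<in> {1..N}" using i arch_end_bounds[OF d, of i] by auto
  have "(j, i) \<in> dec N w" using dec_eq_dec_vec[OF d] i j unfolding dec_vec_def by auto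
  then have "up_pos w i < up_pos w j" "up_pos w j < match_pos w (up_pos w i)" unfolding dec_def by auto
  then have "match_pos w (up_pos w j) < match_pos w (up_pos w i)"
    using match_pos_nested[OF d dyck_up_pos(1,2)[OF d] dyck_up_pos(1,2)[OF d]] i jN by auto
  then show "arch_end w j \<le> arch_end w i" unfolding arch_end_def by (simp add: ups_mono)
qed

lemma inc_base_eq_inc_base_vec:
  assumes d: "dyck N w"
  shows "inc_base N w = inc_base_vec N (arch_end w)"
proof (intro set_eqI iffI; clarify)
  fix i k assume a: "(i, k) \<in> inc_base N w"
  then have ik: "i \<in> {1..N}" "k \<in> {1..N}" and lt: "match_pos w (up_pos w i) < up_pos w k"
    and mn: "\<forall>l\<in>{1..N}. match_pos w (up_pos w i) < up_pos w l \<longrightarrow> up_pos w k \<le> up_pos w l"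
    unfolding inc_base_def by auto
  note M = match_pos_props(2,3)[OF d dyck_up_pos(1,2)[OF d]]
  have k1: "arch_end w i < k" using down_less_up_pos_iff[OF d _ _ M] ik lt unfolding arch_end_def by auto
  then have lt2: "arch_end w i < N" using ik by auto
  have sN: "Suc (arch_end w i) \<in> {1..N}" using lt2 by auto
  have "match_pos w (up_pos w i) < up_pos w (Suc (arch_end w i))"
    using down_less_up_pos_iff[OF d _ _ M] ik sN unfolding arch_end_def by auto
  then have "up_pos w k \<le> up_pos w (Suc (arch_end w i))" using mn sN by auto
  then have "k \<le> Suc (arch_end w i)" using up_pos_less_iff[OF d sN ik(2)] by linarith
  then show "(i, k) \<in> inc_base_vec N (arch_end w)" using k1 lt2 ik unfolding inc_base_vec_def by auto
next
  fix i k assume a: "(i, k) \<in> inc_base_vec N (arch_end w)"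
  then have ik: "i \<in> {1..N}" "arch_end w i < N" "k = Suc (arch_end w i)" unfolding inc_base_vec_def by auto
  have kN: "k \<in> {1..N}" using ik by auto
  note M = match_pos_props(2,3)[OF d dyck_up_pos(1,2)[OF d]]
  have lt: "match_pos w (up_pos w i) < up_pos w k"
    using down_less_up_pos_iff[OF d _ _ M] ik kN unfolding arch_end_def by auto
  have "up_pos w k \<le> up_pos w l" if l: "l \<in> {1..N}" "match_pos w (up_pos w i) < up_pos w l" for l
  proof -
    have "arch_end w i < l" using down_less_up_pos_iff[OF d _ _ M] ik l unfolding arch_end_def by auto
    then have "k \<le> l" using ik by simp
    then show ?thesis using up_pos_less_iff[OF d l(1) kN] by linarith
  qed
  then show "(i, k) \<in> inc_base N w" using ik kN lt unfolding inc_base_def by auto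
qed

lemma height_append_left: "k \<le> length u \<Longrightarrow> height (u @ v) k = height u k"
  by (simp add: height_def)
lemma height_append_right: "height (u @ v) (length u + r) = height u (length u) + height v r"
  by (simp add: height_def)

lemma down_is_matched:
  assumes d: "dyck N w" and a: "a < length w" "\<not> w ! a"
  shows "\<exists>p<a. w ! p \<and> match_pos w p = a"
proof -
  have ha1: "height w (Suc a) = height w a - 1" using height_Suc[OF a(1)] a(2) by simp
  have "height w (Suc a) \<ge> 0" using dyck_height_nonneg[OF d] a by simp
  then have ha: "height w a \<ge> 1" using ha1 by simp
  define S where "S = {p. p \<le> a \<and> height w p < height w a}"
  have fin: "finite S" unfolding S_def by simp
  have ne: "0 \<in> S" unfolding S_def using ha by simp
  define p0 where "p0 = Max S"
  have p0S: "p0 \<in> S" unfolding p0_def using Max_in[OF fin] ne by blast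
  have p0a: "p0 < a" using p0S unfolding S_def by (cases "p0 = a") auto
  have above: "height w k \<ge> height w a" if "p0 < k" "k \<le> a" for k
  proof (rule ccontr)
    assume "\<not> height w k \<ge> height w a"
    then have "k \<in> S" unfolding S_def using that by simp
    then have "k \<le> p0" unfolding p0_def using Max_ge[OF fin] by blast
    then show False using that by simp
  qed
  have p0_less_length: "p0 < length w" using p0a a by simp
  have h1: "height w (Suc p0) \<ge> height w a" using above[of "Suc p0"] p0a by simp
  have h0: "height w p0 < height w a" using p0S unfolding S_def by simp
  have wp: "w ! p0" and hp: "height w p0 = height w a - 1"
    using height_Suc[OF p0_less_length] h1 h0 by (auto split: if_splits)
  have "stays_above w p0 a" unfolding stays_above_def using above hp by force
  then have "a \<le> match_pos w p0" using stays_above_iff_le_match[OF d p0_less_length wp p0a] by simp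
  moreover have "\<not> Suc a \<le> match_pos w p0"
  proof
    assume "Suc a \<le> match_pos w p0"
    then have "height w (Suc a) > height w p0" using match_pos_props(5)[OF d p0_less_length wp] p0a by simp
    then show False using ha1 hp by simp
  qed
  ultimately show ?thesis using p0a wp by auto
qed

lemma dec_iff_stays_above:
  assumes d: "dyck N w"
  shows "(j, i) \<in> dec N w \<longleftrightarrow>
    i \<in> {1..N} \<and> j \<in> {1..N} \<and> i < j \<and> stays_above w (up_pos w i) (up_pos w j)"
proof
  assume "(j, i) \<in> dec N w"
  then have ij: "i \<in> {1..N}" "j \<in> {1..N}" "up_pos w i < up_pos w j"
    "up_pos w j < match_pos w (up_pos w i)" unfolding dec_def by auto
  then show "i \<in> {1..N} \<and> j \<in> {1..N} \<and> i < j \<and> stays_above w (up_pos w i) (up_pos w j)"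
    using up_pos_less_iff[OF d ij(1,2)] stays_above_iff_le_match[OF d dyck_up_pos(1,2)[OF d]] by auto
next
  assume r: "i \<in> {1..N} \<and> j \<in> {1..N} \<and> i < j \<and> stays_above w (up_pos w i) (up_pos w j)"
  then have ij: "i \<in> {1..N}" "j \<in> {1..N}" "i < j" by auto
  have lt: "up_pos w i < up_pos w j" using up_pos_less_iff[OF d ij(1,2)] ij(3) by simp
  have le: "up_pos w j \<le> match_pos w (up_pos w i)"
    using stays_above_iff_le_match[OF d dyck_up_pos(1,2)[OF d] lt] r ij by auto
  have "up_pos w j \<noteq> match_pos w (up_pos w i)"
    using dyck_up_pos(2)[OF d, of j] match_pos_props(3)[OF d dyck_up_pos(1,2)[OF d, of i]] ij by auto
  then show "(j, i) \<in> dec N w" unfolding dec_def using ij lt le by auto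
qed

lemma eq_of_same_interval:
  assumes "i \<le> (e::nat)" "i \<le> c" "\<And>j. (i < j \<and> j \<le> e) \<longleftrightarrow> (i < j \<and> j \<le> c)"
  shows "e = c"
proof (rule ccontr)
  assume "e \<noteq> c"
  then consider "e < c" | "c < e" by linarith
  then show False
  proof cases
    case 1 then show False using assms(3)[of c] assms(1) by simp
  next
    case 2 then show False using assms(3)[of e] assms(2) by simp
  qed
qed

lemma nth_iff_height_less: "k < length w \<Longrightarrow> w ! k \<longleftrightarrow> height w k < height w (Suc k)"
  using height_Suc[of k w] by auto

lemma double_ups_eq: "k \<le> length w \<Longrightarrow> 2 * int (ups w k) = height w k + int k"
  using height_ups[of k w] ups_le[of w k] by simp

lemma match_pos_inj:
  assumes d: "dyck N w" and p: "p < length w" "w ! p" and q: "q < length w" "w ! q"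
    and eq: "match_pos w p = match_pos w q"
  shows "p = q"
proof (rule ccontr)
  assume "p \<noteq> q"
  then consider "p < q" | "q < p" by linarith
  then show False
  proof cases
    case 1
    have "q < match_pos w p"
      using eq match_pos_props(1)[OF d q] by simp
    then show False using match_pos_nested[OF d p q 1] eq by simp
  next
    case 2
    have "p < match_pos w q"
      using eq match_pos_props(1)[OF d p] by simp
    then show False using match_pos_nested[OF d q p 2] eq by simp
  qed
qed

lemma bracket_vectorD:
  assumes "bracket_vector N E" "i \<in> {1..N}"
  shows "i \<le> E i" "E i \<le> N" "\<And>j. i < j \<Longrightarrow> j \<le> E i \<Longrightarrow> E j \<le> E i"
  using assms unfolding bracket_vector_def by auto

lemma inc_vec_less:
  assumes v: "bracket_vector N E" and "(i, k) \<in> inc_vec N E"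
  shows "i < k \<and> i \<in> {1..N} \<and> k \<in> {1..N}"
  using assms(2) unfolding inc_vec_def
proof (induction rule: trancl_induct)
  case (base y)
  then have "i \<in> {1..N}" "E i < N" "y = Suc (E i)" unfolding inc_base_vec_def by auto
  then show ?case using bracket_vectorD(1)[OF v, of i] by auto
next
  case (step y z)
  then have "y \<in> {1..N}" "E y < N" "z = Suc (E y)" unfolding inc_base_vec_def by auto
  then show ?case using bracket_vectorD(1)[OF v, of y] step.IH by auto
qed

lemma inc_vec_ge_arch:
  assumes v: "bracket_vector N E" and "(i, k) \<in> inc_vec N E"
  shows "Suc (E i) \<le> k"
proof -
  have "(i, k) \<in> (inc_base_vec N E)\<^sup>+" using assms(2) unfolding inc_vec_def .
  then show ?thesis
  proof (rule converse_tranclE)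
    assume "(i, k) \<in> inc_base_vec N E" then show ?thesis unfolding inc_base_vec_def by auto
  next
    fix y assume "(i, y) \<in> inc_base_vec N E" "(y, k) \<in> (inc_base_vec N E)\<^sup>+"
    moreover have "y < k" using inc_vec_less[OF v, of y k] calculation(2) unfolding inc_vec_def by auto
    ultimately show ?thesis unfolding inc_base_vec_def by auto
  qed
qed

lemma inc_vec_to_next:
  assumes v: "bracket_vector N E" and i: "i \<in> {1..N}" and lt: "E i < N"
  shows "i < b \<Longrightarrow> b \<le> E i \<Longrightarrow> (b, Suc (E i)) \<in> inc_vec N E"
proof (induction "E i - b" arbitrary: b rule: less_induct)
  case less
  have bN: "b \<in> {1..N}" using less.prems i bracket_vectorD(2)[OF v i] by auto
  have Eb: "E b \<le> E i" "b \<le> E b" using bracket_vectorD[OF v i] bracket_vectorD(1)[OF v bN] less.prems by auto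
  show ?case
  proof (cases "E b = E i")
    case True
    then have "(b, Suc (E i)) \<in> inc_base_vec N E" using bN lt unfolding inc_base_vec_def by auto
    then show ?thesis unfolding inc_vec_def by auto
  next
    case False
    define b' where "b' = Suc (E b)"
    have b': "i < b'" "b' \<le> E i" "E i - b' < E i - b" using Eb False less.prems unfolding b'_def by auto
    have "(b', Suc (E i)) \<in> inc_vec N E" using less.hyps[OF b'(3) b'(1,2)] .
    moreover have "(b, b') \<in> inc_base_vec N E" using bN Eb False lt unfolding inc_base_vec_def b'_def by auto
    ultimately show ?thesis unfolding inc_vec_def by (meson trancl_into_trancl2)
  qed
qed

lemma inc_vec_interval:
  assumes v: "bracket_vector N E" and ac: "(a, c) \<in> inc_vec N E"
  shows "a < b \<Longrightarrow> b < c \<Longrightarrow> (b, c) \<in> inc_vec N E"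
proof -
  have "(a, c) \<in> (inc_base_vec N E)\<^sup>+" using ac unfolding inc_vec_def .
  then have "\<forall>b. a < b \<and> b < c \<longrightarrow> (b, c) \<in> inc_vec N E"
  proof (induction rule: converse_trancl_induct)
    case (base a)
    then have a: "a \<in> {1..N}" "E a < N" "c = Suc (E a)" unfolding inc_base_vec_def by auto
    show ?case using inc_vec_to_next[OF v a(1,2)] a(3) by auto
  next
    case (step a y)
    then have a: "a \<in> {1..N}" "E a < N" "y = Suc (E a)" unfolding inc_base_vec_def by auto
    have yc: "(y, c) \<in> inc_vec N E" using step(2) unfolding inc_vec_def .
    show ?case
    proof (intro allI impI)
      fix b assume b: "a < b \<and> b < c"
      consider "b < y" | "b = y" | "y < b" by linarith
      then show "(b, c) \<in> inc_vec N E"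
      proof cases
        case 1
        then have "(b, y) \<in> inc_vec N E" using inc_vec_to_next[OF v a(1,2), of b] a(3) b by auto
        then show ?thesis using yc unfolding inc_vec_def by (meson trancl_trans)
      next
        case 2 then show ?thesis using yc by simp
      next
        case 3 then show ?thesis using step.IH b by auto
      qed
    qed
  qed
  then show "a < b \<Longrightarrow> b < c \<Longrightarrow> (b, c) \<in> inc_vec N E" by auto
qed

lemma inc_vec_shortcut:
  assumes v: "bracket_vector N E" and ab: "(a, b) \<in> inc_vec N E"
  shows "a < c \<Longrightarrow> c < b \<Longrightarrow> b \<le> E c \<Longrightarrow> (a, c) \<in> inc_vec N E"
proof -
  have "(a, b) \<in> (inc_base_vec N E)\<^sup>+" using ab unfolding inc_vec_def .
  then have "\<forall>c. a < c \<and> c < b \<and> b \<le> E c \<longrightarrow> (a, c) \<in> inc_vec N E"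
  proof (induction rule: trancl_induct)
    case (base b)
    then have a: "a \<in> {1..N}" "E a < N" "b = Suc (E a)" unfolding inc_base_vec_def by auto
    show ?case
    proof (intro allI impI)
      fix c assume c: "a < c \<and> c < b \<and> b \<le> E c"
      then have "E c \<le> E a" using bracket_vectorD(3)[OF v a(1)] a by auto
      then show "(a, c) \<in> inc_vec N E" using c a by auto
    qed
  next
    case (step y b)
    then have y: "y \<in> {1..N}" "E y < N" "b = Suc (E y)" unfolding inc_base_vec_def by auto
    have ay: "(a, y) \<in> inc_vec N E" using step(1) unfolding inc_vec_def .
    show ?case
    proof (intro allI impI)
      fix c assume c: "a < c \<and> c < b \<and> b \<le> E c"
      consider "c < y" | "c = y" | "y < c" by linarith
      then show "(a, c) \<in> inc_vec N E"
      proof cases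
        case 1
        have "y < b" using inc_vec_less[OF v, of y b] step(2) unfolding inc_vec_def by auto
        then show ?thesis using step.IH c 1 by auto
      next
        case 2 then show ?thesis using ay by simp
      next
        case 3
        then have "E c \<le> E y" using bracket_vectorD(3)[OF v y(1)] c y by auto
        then show ?thesis using c y by auto
      qed
    qed
  qed
  then show "a < c \<Longrightarrow> c < b \<Longrightarrow> b \<le> E c \<Longrightarrow> (a, c) \<in> inc_vec N E" by auto
qed

definition IP_vec :: "nat \<Rightarrow> (nat \<Rightarrow> nat) \<Rightarrow> (nat \<Rightarrow> nat) \<Rightarrow> (nat \<times> nat) set" where
  "IP_vec N E1 E2 = Id_on {1..N} \<union> (dec_vec N E1 \<union> inc_vec N E2)\<^sup>+"

lemma dec_vec_less: "(j, i) \<in> dec_vec N E \<Longrightarrow> bracket_vector N E \<Longrightarrow> i < j \<and> i \<in> {1..N} \<and> j \<in> {1..N}"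
  unfolding dec_vec_def using bracket_vectorD(2) by fastforce

locale vec_interval =
  fixes N :: nat and E1 E2 :: "nat \<Rightarrow> nat"
  assumes v1: "bracket_vector N E1" and v2: "bracket_vector N E2" and le12: "\<And>i. i \<in> {1..N} \<Longrightarrow> E1 i \<le> E2 i"
begin

abbreviation dec_inc where "dec_inc \<equiv> dec_vec N E1 \<union> inc_vec N E2"

lemma dec_inc_compose:
  assumes xy: "(x, y) \<in> dec_inc" and yz: "(y, z) \<in> dec_inc"
  shows "(x, z) \<in> dec_inc \<or> x = z"
proof -
  consider "(x, y) \<in> dec_vec N E1" "(y, z) \<in> dec_vec N E1" | "(x, y) \<in> inc_vec N E2" "(y, z) \<in> inc_vec N E2"
    | "(x, y) \<in> dec_vec N E1" "(y, z) \<in> inc_vec N E2" | "(x, y) \<in> inc_vec N E2" "(y, z) \<in> dec_vec N E1"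
    using xy yz by blast
  then show ?thesis
  proof cases
    case 1
    then have a: "y < x" "x \<le> E1 y" "y \<in> {1..N}" "z < y" "y \<le> E1 z" "z \<in> {1..N}" unfolding dec_vec_def by auto
    then have "E1 y \<le> E1 z" using bracket_vectorD(3)[OF v1 a(6)] by auto
    then show ?thesis using a unfolding dec_vec_def by auto
  next
    case 2 then show ?thesis unfolding inc_vec_def by (meson UnI2 trancl_trans)
  next
    case 3
    then have a: "y < x" "x \<le> E1 y" "y \<in> {1..N}" unfolding dec_vec_def by auto
    have "Suc (E2 y) \<le> z" using inc_vec_ge_arch[OF v2] 3(2) by blast
    then have "x < z" using a le12[OF a(3)] by simp
    then show ?thesis using inc_vec_interval[OF v2 3(2) a(1)] by auto
  next
    case 4
    then have a: "z < y" "y \<le> E1 z" "z \<in> {1..N}" unfolding dec_vec_def by auto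
    have xy': "x < y" "x \<in> {1..N}" using inc_vec_less[OF v2 4(1)] by auto
    consider "z = x" | "x < z" | "z < x" by linarith
    then show ?thesis
    proof cases
      case 1 then show ?thesis by simp
    next
      case 2
      then show ?thesis using inc_vec_shortcut[OF v2 4(1) 2 a(1)] a le12[OF a(3)] by auto
    next
      case 3
      then show ?thesis using a xy' unfolding dec_vec_def by auto
    qed
  qed
qed

lemma dec_inc_in_range: "(x, y) \<in> dec_inc \<Longrightarrow> x \<in> {1..N} \<and> y \<in> {1..N}"
  using dec_vec_less[OF _ v1] inc_vec_less[OF v2] by blast

lemma dec_inc_trancl: "(x, y) \<in> dec_inc\<^sup>+ \<Longrightarrow> (x, y) \<in> dec_inc \<or> (x = y \<and> x \<in> {1..N})"
proof (induction rule: trancl_induct)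
  case (base y) then show ?case by simp
next
  case (step y z)
  show ?case
  proof (cases "x = y")
    case True then show ?thesis using step by auto
  next
    case False
    then have "(x, y) \<in> dec_inc" using step.IH by auto
    then have "(x, z) \<in> dec_inc \<or> x = z" using dec_inc_compose step.hyps(2) by blast
    then show ?thesis using dec_inc_in_range \<open>(x, y) \<in> dec_inc\<close> by blast
  qed
qed

lemma IP_vec_eq: "IP_vec N E1 E2 = Id_on {1..N} \<union> dec_vec N E1 \<union> inc_vec N E2"
proof -
  have "(dec_vec N E1 \<union> inc_vec N E2)\<^sup>+ \<subseteq> Id_on {1..N} \<union> dec_vec N E1 \<union> inc_vec N E2"
  proof
    fix z assume "z \<in> (dec_vec N E1 \<union> inc_vec N E2)\<^sup>+"
    then have "(fst z, snd z) \<in> dec_inc\<^sup>+" by simp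
    then have "(fst z, snd z) \<in> dec_inc \<or> (fst z = snd z \<and> fst z \<in> {1..N})" by (rule dec_inc_trancl)
    then show "z \<in> Id_on {1..N} \<union> dec_vec N E1 \<union> inc_vec N E2" by (cases z) (auto simp: Id_on_def)
  qed
  then show ?thesis unfolding IP_vec_def by auto
qed

lemma trans_IP_vec: "trans (IP_vec N E1 E2)"
proof (rule transI)
  fix x y z assume a: "(x, y) \<in> IP_vec N E1 E2" "(y, z) \<in> IP_vec N E1 E2"
  show "(x, z) \<in> IP_vec N E1 E2"
  proof (cases "x = y \<or> y = z")
    case True then show ?thesis using a by auto
  next
    case False
    then have "(x, y) \<in> dec_inc" "(y, z) \<in> dec_inc" using a unfolding IP_vec_eq by auto
    then have "(x, z) \<in> dec_inc \<or> x = z" "x \<in> {1..N}" using dec_inc_compose dec_inc_in_range by blast+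
    then show ?thesis unfolding IP_vec_eq by auto
  qed
qed

lemma inc_vec_dec_vec_disjoint: "(u, v) \<in> inc_vec N E2 \<Longrightarrow> (v, u) \<notin> dec_vec N E1"
  using inc_vec_ge_arch[OF v2, of u v] le12[of u] unfolding dec_vec_def by auto

lemma antisym_IP_vec: "antisym (IP_vec N E1 E2)"
proof (rule antisymI)
  fix x y assume a: "(x, y) \<in> IP_vec N E1 E2" "(y, x) \<in> IP_vec N E1 E2"
  show "x = y"
  proof (rule ccontr)
    assume ne: "x \<noteq> y"
    have "(u, v) \<in> inc_vec N E2 \<and> (v, u) \<in> dec_vec N E1" if "u < v" "{(u, v), (v, u)} \<subseteq> IP_vec N E1 E2" for u v
      using that dec_vec_less[OF _ v1, of u v] inc_vec_less[OF v2, of v u] unfolding IP_vec_eq by auto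
    then show False using inc_vec_dec_vec_disjoint a ne by (cases x y rule: linorder_cases) blast+
  qed
qed

lemma IP_vec_interval_poset: "interval_poset N (IP_vec N E1 E2)"
  unfolding interval_poset_def
proof (intro conjI allI impI ballI)
  show "IP_vec N E1 E2 \<subseteq> {1..N} \<times> {1..N}"
    unfolding IP_vec_eq by (auto simp: Id_on_def dest: dec_inc_in_range[OF UnI1] dec_inc_in_range[OF UnI2])
  show "trans (IP_vec N E1 E2)" "antisym (IP_vec N E1 E2)" by (fact trans_IP_vec antisym_IP_vec)+
  fix x a b c
  show "x \<in> {1..N} \<Longrightarrow> (x, x) \<in> IP_vec N E1 E2" unfolding IP_vec_def by auto
  assume abc: "1 \<le> a \<and> a < b \<and> b < c \<and> c \<le> N"
  show "(b, c) \<in> IP_vec N E1 E2" if "(a, c) \<in> IP_vec N E1 E2"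
  proof -
    have "(a, c) \<in> inc_vec N E2" using that abc dec_vec_less[OF _ v1, of a c] unfolding IP_vec_eq by auto
    then show ?thesis using inc_vec_interval[OF v2] abc unfolding IP_vec_eq by auto
  qed
  show "(b, a) \<in> IP_vec N E1 E2" if "(c, a) \<in> IP_vec N E1 E2"
  proof -
    have "(c, a) \<in> dec_vec N E1" using that abc inc_vec_less[OF v2, of c a] unfolding IP_vec_eq by auto
    then show ?thesis using abc unfolding IP_vec_eq dec_vec_def by auto
  qed
qed

lemma IP_vec_dec_part: "{(x, y). (x, y) \<in> IP_vec N E1 E2 \<and> y < x} = dec_vec N E1"
  unfolding IP_vec_eq using dec_vec_less[OF _ v1] inc_vec_less[OF v2] by fastforce

lemma IP_vec_inc_part: "{(x, y). (x, y) \<in> IP_vec N E1 E2 \<and> x < y} = inc_vec N E2"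
  unfolding IP_vec_eq using dec_vec_less[OF _ v1] inc_vec_less[OF v2] by fastforce

end

lemma dec_vec_inj:
  assumes "bracket_vector N E" "bracket_vector N E'" "dec_vec N E = dec_vec N E'" "i \<in> {1..N}"
  shows "E i = E' i"
proof (rule ccontr)
  assume ne: "E i \<noteq> E' i"
  have b: "i \<le> E i" "E i \<le> N" "i \<le> E' i" "E' i \<le> N" using bracket_vectorD assms by auto
  consider "E i < E' i" | "E' i < E i" using ne by linarith
  then show False
  proof cases
    case 1
    then have "(E' i, i) \<in> dec_vec N E'" using b assms(4) unfolding dec_vec_def by auto
    then have "(E' i, i) \<in> dec_vec N E" using assms(3) by simp
    then show False using 1 unfolding dec_vec_def by auto
  next
    case 2
    then have "(E i, i) \<in> dec_vec N E" using b assms(4) unfolding dec_vec_def by auto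
    then have "(E i, i) \<in> dec_vec N E'" using assms(3) by simp
    then show False using 2 unfolding dec_vec_def by auto
  qed
qed

lemma inc_vec_inj:
  assumes "bracket_vector N E" "bracket_vector N E'" "inc_vec N E = inc_vec N E'" "i \<in> {1..N}"
  shows "E i = E' i"
proof (rule ccontr)
  assume ne: "E i \<noteq> E' i"
  have b: "i \<le> E i" "E i \<le> N" "i \<le> E' i" "E' i \<le> N" using bracket_vectorD assms by auto
  consider "E i < E' i" | "E' i < E i" using ne by linarith
  then show False
  proof cases
    case 1
    then have "(i, Suc (E i)) \<in> inc_vec N E" using b assms(4) unfolding inc_vec_def inc_base_vec_def by auto
    then have "(i, Suc (E i)) \<in> inc_vec N E'" using assms(3) by simp
    then show False using 1 inc_vec_ge_arch[OF assms(2)] by fastforce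
  next
    case 2
    then have "(i, Suc (E' i)) \<in> inc_vec N E'" using b assms(4) unfolding inc_vec_def inc_base_vec_def by auto
    then have "(i, Suc (E' i)) \<in> inc_vec N E" using assms(3) by simp
    then show False using 2 inc_vec_ge_arch[OF assms(1)] by fastforce
  qed
qed

definition dec_end :: "nat \<Rightarrow> (nat \<times> nat) set \<Rightarrow> nat \<Rightarrow> nat" where
  "dec_end N R i = Max {j. j \<le> N \<and> i \<le> j \<and> (j, i) \<in> R}"

definition inc_succ :: "nat \<Rightarrow> (nat \<times> nat) set \<Rightarrow> nat \<Rightarrow> nat \<Rightarrow> bool" where
  "inc_succ N R i k \<longleftrightarrow> i < k \<and> k \<le> N \<and> (i, k) \<in> R"

definition inc_end :: "nat \<Rightarrow> (nat \<times> nat) set \<Rightarrow> nat \<Rightarrow> nat" where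
  "inc_end N R i = (if \<exists>k. inc_succ N R i k then (LEAST k. inc_succ N R i k) - 1 else N)"

locale tamari_interval_poset =
  fixes N :: nat and R :: "(nat \<times> nat) set"
  assumes ip: "interval_poset N R"
begin

lemma in_range: "(x, y) \<in> R \<Longrightarrow> x \<in> {1..N} \<and> y \<in> {1..N}"
  and reflexive: "x \<in> {1..N} \<Longrightarrow> (x, x) \<in> R"
  and transitive: "trans R"
  and antisymmetric: "antisym R"
  and inc_convex: "1 \<le> a \<Longrightarrow> a < b \<Longrightarrow> b < c \<Longrightarrow> c \<le> N \<Longrightarrow> (a, c) \<in> R \<Longrightarrow> (b, c) \<in> R"
  and dec_convex: "1 \<le> a \<Longrightarrow> a < b \<Longrightarrow> b < c \<Longrightarrow> c \<le> N \<Longrightarrow> (c, a) \<in> R \<Longrightarrow> (b, a) \<in> R"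
  using ip unfolding interval_poset_def by blast+

lemma dec_end_props:
  assumes i: "i \<in> {1..N}"
  shows "i \<le> dec_end N R i" "dec_end N R i \<le> N" "(dec_end N R i, i) \<in> R"
    and "\<And>j. j \<le> N \<Longrightarrow> i \<le> j \<Longrightarrow> (j, i) \<in> R \<Longrightarrow> j \<le> dec_end N R i"
proof -
  have fin: "finite {j. j \<le> N \<and> i \<le> j \<and> (j, i) \<in> R}" by simp
  have ne: "i \<in> {j. j \<le> N \<and> i \<le> j \<and> (j, i) \<in> R}" using i reflexive by auto
  show "i \<le> dec_end N R i" "dec_end N R i \<le> N" "(dec_end N R i, i) \<in> R"
    unfolding dec_end_def using Max_in[OF fin] ne by blast+
  show "\<And>j. j \<le> N \<Longrightarrow> i \<le> j \<Longrightarrow> (j, i) \<in> R \<Longrightarrow> j \<le> dec_end N R i"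
    unfolding dec_end_def using Max_ge[OF fin] by blast
qed

lemma dec_vec_dec_end: "dec_vec N (dec_end N R) = {(j, i). (j, i) \<in> R \<and> i < j}"
proof (intro set_eqI iffI; clarify)
  fix j i assume "(j, i) \<in> dec_vec N (dec_end N R)"
  then have ji: "i \<in> {1..N}" "i < j" "j \<le> dec_end N R i" unfolding dec_vec_def by auto
  show "(j, i) \<in> R \<and> i < j"
  proof (cases "j = dec_end N R i")
    case True then show ?thesis using dec_end_props[OF ji(1)] ji by auto
  next
    case False
    then show ?thesis using dec_convex[of i j "dec_end N R i"] ji dec_end_props[OF ji(1)] by auto
  qed
next
  fix j i assume "(j, i) \<in> R" "i < j"
  then show "(j, i) \<in> dec_vec N (dec_end N R)"
    using in_range dec_end_props(4) unfolding dec_vec_def by fastforce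
qed

lemma bracket_vector_dec_end: "bracket_vector N (dec_end N R)"
  unfolding bracket_vector_def
proof (intro ballI conjI allI impI)
  fix i assume i: "i \<in> {1..N}"
  then show "i \<le> dec_end N R i" "dec_end N R i \<le> N" using dec_end_props by auto
  fix j assume j: "i < j \<and> j \<le> dec_end N R i"
  then have ji: "(j, i) \<in> R" using i dec_vec_dec_end unfolding dec_vec_def by blast
  have jN: "j \<in> {1..N}" using j i dec_end_props(2)[OF i] by auto
  have "(dec_end N R j, i) \<in> R" using dec_end_props(3)[OF jN] ji transitive by (meson transD)
  then show "dec_end N R j \<le> dec_end N R i" using dec_end_props[OF jN] dec_end_props(4)[OF i] j by auto
qed

lemma inc_end_props:
  assumes i: "i \<in> {1..N}"
  shows "i \<le> inc_end N R i" "inc_end N R i \<le> N"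
    and "(\<exists>k. inc_succ N R i k) \<Longrightarrow> inc_end N R i < N"
    and "inc_end N R i < N \<Longrightarrow> inc_succ N R i (Suc (inc_end N R i))"
    and "inc_succ N R i k \<Longrightarrow> Suc (inc_end N R i) \<le> k"
proof -
  have "i \<le> inc_end N R i \<and> inc_end N R i \<le> N \<and> ((\<exists>k. inc_succ N R i k) \<longrightarrow> inc_end N R i < N) \<and>
    (inc_end N R i < N \<longrightarrow> inc_succ N R i (Suc (inc_end N R i))) \<and>
    (\<forall>k. inc_succ N R i k \<longrightarrow> Suc (inc_end N R i) \<le> k)"
  proof (cases "\<exists>k. inc_succ N R i k")
    case True
    define k0 where "k0 = (LEAST k. inc_succ N R i k)"
    have k0: "inc_succ N R i k0" unfolding k0_def using LeastI_ex[OF True] .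
    have k0_least: "\<And>k. inc_succ N R i k \<Longrightarrow> k0 \<le> k" unfolding k0_def by (rule Least_le)
    have "Suc (inc_end N R i) = k0" "i < k0" "k0 \<le> N"
      using True k0 unfolding inc_end_def k0_def[symmetric] inc_succ_def by auto
    then show ?thesis using k0 k0_least by auto
  next
    case False
    then show ?thesis using i unfolding inc_end_def by auto
  qed
  then show "i \<le> inc_end N R i" "inc_end N R i \<le> N"
    and "(\<exists>k. inc_succ N R i k) \<Longrightarrow> inc_end N R i < N"
    and "inc_end N R i < N \<Longrightarrow> inc_succ N R i (Suc (inc_end N R i))"
    and "inc_succ N R i k \<Longrightarrow> Suc (inc_end N R i) \<le> k" by blast+
qed

lemma inc_vec_inc_end: "inc_vec N (inc_end N R) = {(i, k). (i, k) \<in> R \<and> i < k}"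
proof (intro set_eqI iffI; clarify)
  fix i k assume "(i, k) \<in> inc_vec N (inc_end N R)"
  then have "(i, k) \<in> (inc_base_vec N (inc_end N R))\<^sup>+" unfolding inc_vec_def .
  then show "(i, k) \<in> R \<and> i < k"
  proof (induction rule: trancl_induct)
    case (base y)
    then show ?case using inc_end_props unfolding inc_base_vec_def inc_succ_def by auto
  next
    case (step y z)
    then have "(y, z) \<in> R" "y < z"
      using inc_end_props unfolding inc_base_vec_def inc_succ_def by auto
    then show ?case using step.IH transitive by (meson order.strict_trans transD)
  qed
next
  fix i k assume "(i, k) \<in> R" "i < k"
  then show "(i, k) \<in> inc_vec N (inc_end N R)"
  proof (induction "k - i" arbitrary: i rule: less_induct)
    case less
    have i: "i \<in> {1..N}" "k \<le> N" using less.prems in_range by auto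
    have succ: "inc_succ N R i k" unfolding inc_succ_def using less.prems i by auto
    define k0 where "k0 = Suc (inc_end N R i)"
    have k0: "inc_end N R i < N" "inc_succ N R i k0" "k0 \<le> k"
      using inc_end_props[OF i(1)] succ unfolding k0_def by auto
    have step: "(i, k0) \<in> inc_base_vec N (inc_end N R)"
      using i k0 unfolding inc_base_vec_def k0_def by auto
    show ?case
    proof (cases "k0 = k")
      case True then show ?thesis using step unfolding inc_vec_def by auto
    next
      case False
      have "i < k0" "k0 < k" using k0 False unfolding inc_succ_def by auto
      then have "(k0, k) \<in> inc_vec N (inc_end N R)"
        using less.hyps inc_convex[of i k0 k] less.prems i by auto
      then show ?thesis using step unfolding inc_vec_def by (meson trancl_into_trancl2)
    qed
  qed
qed

lemma bracket_vector_inc_end: "bracket_vector N (inc_end N R)"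
  unfolding bracket_vector_def
proof (intro ballI conjI allI impI)
  fix i assume i: "i \<in> {1..N}"
  then show "i \<le> inc_end N R i" "inc_end N R i \<le> N" using inc_end_props by auto
  fix j assume j: "i < j \<and> j \<le> inc_end N R i"
  have jN: "j \<in> {1..N}" using j i inc_end_props(2)[OF i] by auto
  show "inc_end N R j \<le> inc_end N R i"
  proof (cases "inc_end N R i < N")
    case True
    then have succ: "inc_succ N R i (Suc (inc_end N R i))" using inc_end_props(4)[OF i] by blast
    then have "inc_succ N R j (Suc (inc_end N R i))"
      using inc_convex[of i j "Suc (inc_end N R i)"] i j unfolding inc_succ_def by auto
    then have "Suc (inc_end N R j) \<le> Suc (inc_end N R i)" by (rule inc_end_props(5)[OF jN])
    then show ?thesis by simp
  next
    case False then show ?thesis using inc_end_props(2)[OF jN] by auto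
  qed
qed

lemma dec_end_le_inc_end:
  assumes i: "i \<in> {1..N}"
  shows "dec_end N R i \<le> inc_end N R i"
proof (rule ccontr)
  assume "\<not> dec_end N R i \<le> inc_end N R i"
  then have lt: "inc_end N R i < dec_end N R i" by simp
  then have succ: "inc_succ N R i (Suc (inc_end N R i))"
    using inc_end_props(4)[OF i] dec_end_props(2)[OF i] by auto
  have "(Suc (inc_end N R i), i) \<in> dec_vec N (dec_end N R)"
    using lt i inc_end_props(1)[OF i] unfolding dec_vec_def by auto
  then have "(Suc (inc_end N R i), i) \<in> R" using dec_vec_dec_end by auto
  moreover have "(i, Suc (inc_end N R i)) \<in> R" using succ unfolding inc_succ_def by auto
  ultimately have "Suc (inc_end N R i) = i" using antisymmetric by (simp add: antisymD)
  then show False using succ unfolding inc_succ_def by simp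
qed

lemma vec_interval: "vec_interval N (dec_end N R) (inc_end N R)"
  using bracket_vector_dec_end bracket_vector_inc_end dec_end_le_inc_end by unfold_locales

lemma eq_IP_vec: "R = IP_vec N (dec_end N R) (inc_end N R)"
proof -
  interpret vec_interval N "dec_end N R" "inc_end N R" by (rule vec_interval)
  have "R = Id_on {1..N} \<union> dec_vec N (dec_end N R) \<union> inc_vec N (inc_end N R)"
  proof (intro set_eqI iffI)
    fix z assume z: "z \<in> R"
    obtain x y where xy: "z = (x, y)" by (cases z)
    then show "z \<in> Id_on {1..N} \<union> dec_vec N (dec_end N R) \<union> inc_vec N (inc_end N R)"
      using z in_range dec_vec_dec_end inc_vec_inc_end by (cases x y rule: linorder_cases) auto
  next
    fix z assume "z \<in> Id_on {1..N} \<union> dec_vec N (dec_end N R) \<union> inc_vec N (inc_end N R)"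
    then show "z \<in> R" using dec_vec_dec_end inc_vec_inc_end reflexive by (auto simp: Id_on_def)
  qed
  then show ?thesis using IP_vec_eq by simp
qed

end

text \<open>Rotation of \<open>P = xs D W zs\<close> into \<open>P' = xs W D zs\<close>. Only the up-step \<open>i0\<close>
  matched with this \<open>D\<close> changes its arch end, which grows to cover \<open>W\<close>.\<close>

locale rotation_site =
  fixes N :: nat and P xs W zs :: "bool list"
  assumes d: "dyck N P" and Peq: "P = xs @ [False] @ W @ zs" and bW: "balanced W"
begin

definition "P' = xs @ W @ [False] @ zs"
definition "a = length xs"
definition "L = length W"

lemma length_P: "length P = a + 1 + L + length zs" unfolding Peq a_def L_def by simp
lemma length_P': "length P' = length P" unfolding P'_def Peq by simp

lemma height_W: "r \<le> L \<Longrightarrow> height W r \<ge> 0" "height W L = 0"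
proof -
  have dW: "dyck (L div 2) W" using bW unfolding balanced_def L_def by simp
  show "r \<le> L \<Longrightarrow> height W r \<ge> 0" using dyck_height_nonneg[OF dW] unfolding L_def by simp
  show "height W L = 0" using dyck_height_end[OF dW] unfolding L_def by simp
qed

lemma height_P_before: "k \<le> a \<Longrightarrow> height P k = height xs k"
  unfolding Peq a_def by (simp add: height_append_left)
lemma height_P'_before: "k \<le> a \<Longrightarrow> height P' k = height xs k"
  unfolding P'_def a_def by (simp add: height_append_left)

lemma height_P_W: "r \<le> L \<Longrightarrow> height P (a + 1 + r) = height xs a - 1 + height W r"
proof -
  assume r: "r \<le> L"
  have "height P (a + (1 + r)) = height xs a + height ([False] @ W @ zs) (1 + r)"
    unfolding Peq a_def by (rule height_append_right)
  also have "height ([False] @ W @ zs) (1 + r) = height [False] 1 + height (W @ zs) r"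
    using height_append_right[of "[False]" "W @ zs" r] by simp
  also have "height (W @ zs) r = height W r" using r unfolding L_def by (simp add: height_append_left)
  finally show ?thesis by (simp add: height_def)
qed

lemma height_P_after: "height P (a + 1 + L + r) = height xs a - 1 + height zs r"
proof -
  have e1: "height P (a + (1 + (L + r))) = height xs a + height ([False] @ W @ zs) (1 + (L + r))"
    unfolding Peq a_def by (rule height_append_right)
  have e2: "height ([False] @ (W @ zs)) (1 + (L + r)) = height [False] 1 + height (W @ zs) (L + r)"
    using height_append_right[of "[False]" "W @ zs" "L + r"] by simp
  have e3: "height (W @ zs) (L + r) = height W L + height zs r" unfolding L_def by (rule height_append_right)
  have hF: "height [False] 1 = -1" by (simp add: height_def)
  have "a + 1 + L + r = a + (1 + (L + r))" by simp
  then have "height P (a + 1 + L + r) = height P (a + (1 + (L + r)))" by (simp only:)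
  then show ?thesis using e1 e2 e3 height_W(2) hF by simp
qed

lemma height_P'_W: "r \<le> L \<Longrightarrow> height P' (a + r) = height xs a + height W r"
proof -
  assume r: "r \<le> L"
  have "height P' (a + r) = height xs a + height (W @ [False] @ zs) r"
    unfolding P'_def a_def by (rule height_append_right)
  also have "height (W @ [False] @ zs) r = height W r" using r unfolding L_def by (simp add: height_append_left)
  finally show ?thesis .
qed

lemma height_P'_after: "height P' (a + 1 + L + r) = height xs a - 1 + height zs r"
proof -
  have e1: "height P' (a + (L + (1 + r))) = height xs a + height (W @ [False] @ zs) (L + (1 + r))"
    unfolding P'_def a_def by (rule height_append_right)
  have e2: "height (W @ ([False] @ zs)) (L + (1 + r)) = height W L + height ([False] @ zs) (1 + r)"
    unfolding L_def by (rule height_append_right)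
  have e3: "height ([False] @ zs) (1 + r) = height [False] 1 + height zs r"
    using height_append_right[of "[False]" zs r] by simp
  have hF: "height [False] 1 = -1" by (simp add: height_def)
  have "a + 1 + L + r = a + (L + (1 + r))" by simp
  then have "height P' (a + 1 + L + r) = height P' (a + (L + (1 + r)))" by (simp only:)
  then show ?thesis using e1 e2 e3 height_W(2) hF by simp
qed

lemma height_P'_outside: "k \<le> a \<or> a + 1 + L \<le> k \<Longrightarrow> height P' k = height P k"
proof -
  assume "k \<le> a \<or> a + 1 + L \<le> k"
  then show ?thesis
  proof
    assume "k \<le> a" then show ?thesis using height_P_before height_P'_before by simp
  next
    assume "a + 1 + L \<le> k"
    then obtain r where "k = a + 1 + L + r" by (metis le_add_diff_inverse)
    then show ?thesis using height_P_after height_P'_after by simp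
  qed
qed

lemma height_P'_inside: "a \<le> k \<Longrightarrow> k \<le> a + L \<Longrightarrow> height P' k = height P (Suc k) + 1"
proof -
  assume k: "a \<le> k" "k \<le> a + L"
  then obtain r where r: "k = a + r" "r \<le> L" by (metis le_add_diff_inverse nat_add_left_cancel_le)
  then show ?thesis using height_P'_W[OF r(2)] height_P_W[OF r(2)] by simp
qed

lemma height_P_W_ge: "a + 1 \<le> k \<Longrightarrow> k \<le> a + 1 + L \<Longrightarrow> height P k \<ge> height P a - 1"
proof -
  assume k: "a + 1 \<le> k" "k \<le> a + 1 + L"
  then obtain r where r: "k = a + 1 + r" "r \<le> L" by (metis le_add_diff_inverse nat_add_left_cancel_le)
  then show ?thesis using height_P_W[OF r(2)] height_W(1)[OF r(2)] height_P_before[of a] by simp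
qed

lemma height_P_after_down: "height P (a + 1) = height P a - 1"
  using height_P_W[of 0] height_P_before[of a] by (simp add: height_def)

lemma height_P_after_W: "height P (a + 1 + L) = height P a - 1"
  using height_P_W[of L] height_W(2) height_P_before[of a] by simp

lemma P_down: "\<not> P ! a" "a < length P" unfolding Peq a_def by auto

lemma dyck_P': "dyck N P'"
  unfolding dyck_def
proof (intro conjI allI impI)
  show "length P' = 2 * N" using length_P' dyck_length[OF d] by simp
  show "count_list P' True = N" using dyck_count_True[OF d] unfolding Peq P'_def by simp
  fix k assume k: "k \<le> length P'"
  show "0 \<le> height P' k"
  proof (cases "k \<le> a \<or> a + 1 + L \<le> k")
    case True then show ?thesis using height_P'_outside dyck_height_nonneg[OF d] k length_P' by simp
  next
    case False
    then have "height P' k = height P (Suc k) + 1" using height_P'_inside by simp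
    moreover have "Suc k \<le> length P" using False length_P by simp
    ultimately show ?thesis using dyck_height_nonneg[OF d] by fastforce
  qed
qed

definition shift :: "nat \<Rightarrow> nat" where
  "shift p = (if p < a then p else if p \<le> a + L then p - 1 else p)"

lemma shift_props:
  assumes p: "p < length P" "P ! p"
  shows "shift p < length P'" "P' ! shift p" "ups P' (shift p) = ups P p"
proof -
  have pa: "p \<noteq> a" using p P_down by auto
  have c: "ups P' (shift p) = ups P p \<and> height P' (Suc (shift p)) - height P' (shift p) = height P (Suc p) - height P p"
  proof (cases "p < a \<or> a + L < p")
    case True
    then have ph: "shift p = p" unfolding shift_def by auto
    have "height P' p = height P p" "height P' (Suc p) = height P (Suc p)" using height_P'_outside True by auto
    moreover have "2 * int (ups P' p) = 2 * int (ups P p)"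
      using double_ups_eq[of p P] double_ups_eq[of p P'] p length_P' calculation by simp
    ultimately show ?thesis using ph by simp
  next
    case False
    then have r: "a < p" "p \<le> a + L" using pa by auto
    then have ph: "shift p = p - 1" unfolding shift_def by auto
    have e1: "height P' (p - 1) = height P p + 1" using height_P'_inside[of "p - 1"] r by simp
    have e2: "height P' p = height P (Suc p) + 1" using height_P'_inside[of p] r by simp
    have "2 * int (ups P' (p - 1)) = height P' (p - 1) + int (p - 1)"
      using double_ups_eq[of "p - 1" P'] p length_P' by simp
    also have "\<dots> = height P p + int p" using e1 r by simp
    also have "\<dots> = 2 * int (ups P p)" using double_ups_eq[of p P] p by simp
    finally show ?thesis using ph e1 e2 r by simp
  qed
  show "shift p < length P'" using p length_P' unfolding shift_def by auto
  then show "P' ! shift p" using nth_iff_height_less[of "shift p" P'] nth_iff_height_less[of p P] p c by simp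
  show "ups P' (shift p) = ups P p" using c by simp
qed

lemma up_pos_P': "i \<in> {1..N} \<Longrightarrow> up_pos P' i = shift (up_pos P i)"
proof -
  assume i: "i \<in> {1..N}"
  have u: "up_pos P i < length P" "P ! up_pos P i" "ups P (up_pos P i) = i - 1" using dyck_up_pos[OF d] i by auto
  have "up_pos P' (Suc (ups P' (shift (up_pos P i)))) = shift (up_pos P i)"
    using up_pos_eqI shift_props[OF u(1,2)] by blast
  then show ?thesis using shift_props(3)[OF u(1,2)] u(3) i by simp
qed

definition "p0 = (SOME p. p < a \<and> P ! p \<and> match_pos P p = a)"

lemma p0_props: "p0 < a" "P ! p0" "match_pos P p0 = a"
proof -
  have "\<exists>p. p < a \<and> P ! p \<and> match_pos P p = a" using down_is_matched[OF d P_down(2,1)] by blast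
  then have "p0 < a \<and> P ! p0 \<and> match_pos P p0 = a" unfolding p0_def by (rule someI_ex)
  then show "p0 < a" "P ! p0" "match_pos P p0 = a" by auto
qed

lemma p0_less_length: "p0 < length P" using p0_props(1) P_down(2) by simp

lemma height_above_p0: "p0 < k \<Longrightarrow> k \<le> a \<Longrightarrow> height P k > height P p0"
  using match_pos_props(5)[OF d p0_less_length p0_props(2)] p0_props(3) by simp

lemma stays_above_left_left:
  assumes "p < q" "q \<le> a"
  shows "stays_above P' p q \<longleftrightarrow> stays_above P p q"
  unfolding stays_above_def using height_P'_outside assms by auto

lemma stays_above_left_W_dest:
  assumes pq: "p < a" "a < q" "q \<le> a + L" and pP: "P ! p" and i: "stays_above P' p (q - 1)"
  shows "stays_above P p q \<or> p = p0"
proof (cases "p = p0")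
  case True then show ?thesis by simp
next
  case False
  have pl: "p < length P" using pq P_down by simp
  have lo: "height P k > height P p" if "p < k" "k \<le> a" for k
    using i that pq height_P'_outside[of k] height_P'_outside[of p] unfolding stays_above_def by auto
  have "height P (a + 1) \<noteq> height P p"
  proof
    assume eq: "height P (a + 1) = height P p"
    have "a \<le> match_pos P p" using stays_above_iff_le_match[OF d pl pP pq(1)] lo unfolding stays_above_def by auto
    moreover have "\<not> a + 1 \<le> match_pos P p"
    proof
      assume "a + 1 \<le> match_pos P p"
      then have "height P (a + 1) > height P p" using match_pos_props(5)[OF d pl pP, of "a + 1"] pq by simp
      then show False using eq by simp
    qed
    ultimately have "match_pos P p = a" by simp
    then show False using match_pos_inj[OF d pl pP p0_less_length p0_props(2)] p0_props(3) False by simp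
  qed
  moreover have "height P a > height P p" using lo pq by simp
  ultimately have gt: "height P a - 1 > height P p" using height_P_after_down by simp
  have "height P k > height P p" if "p < k" "k \<le> q" for k
  proof (cases "k \<le> a")
    case True then show ?thesis using lo that by simp
  next
    case False
    then show ?thesis using height_P_W_ge[of k] gt that pq by fastforce
  qed
  then show ?thesis unfolding stays_above_def by simp
qed

lemma stays_above_left_WI:
  assumes pq: "p < a" "a < q" "q \<le> a + L" and i: "stays_above P p q \<or> p = p0"
  shows "stays_above P' p (q - 1)"
  unfolding stays_above_def
proof (intro allI impI)
  fix k assume k: "p < k \<and> k \<le> q - 1"
  have hp: "height P' p = height P p" using height_P'_outside pq by simp
  show "height P' p < height P' k"
  proof (cases "k \<le> a")
    case True
    then have "height P' k = height P k" using height_P'_outside by simp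
    moreover have "height P k > height P p" using i k True pq height_above_p0 unfolding stays_above_def by auto
    ultimately show ?thesis using hp by simp
  next
    case False
    then have hk: "height P' k = height P (Suc k) + 1" using height_P'_inside k pq by simp
    show ?thesis using i
    proof
      assume "stays_above P p q"
      then have "height P (Suc k) > height P p" using k pq unfolding stays_above_def by auto
      then show ?thesis using hk hp by simp
    next
      assume p: "p = p0"
      have "height P (Suc k) \<ge> height P a - 1" using height_P_W_ge[of "Suc k"] False k pq by simp
      moreover have "height P a > height P p0" using height_above_p0[of a] p0_props(1) by simp
      ultimately show ?thesis using hk hp p by simp
    qed
  qed
qed

lemma stays_above_left_right:
  assumes pq: "p < a" "a + L < q"
  shows "stays_above P' p q \<longleftrightarrow> stays_above P p q"
proof
  assume i: "stays_above P' p q"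
  have hp: "height P' p = height P p" using height_P'_outside pq by simp
  have "height P' p < height P' (a + 1 + L)" using i pq unfolding stays_above_def by simp
  then have "height P (a + 1 + L) > height P p"
    using height_P'_outside[of "a + 1 + L"] hp by simp
  then have g: "height P a - 1 > height P p" using height_P_after_W by simp
  show "stays_above P p q" unfolding stays_above_def
  proof (intro allI impI)
    fix k assume k: "p < k \<and> k \<le> q"
    show "height P p < height P k"
    proof (cases "k \<le> a \<or> a + 1 + L \<le> k")
      case True then show ?thesis using i k height_P'_outside[of k] hp unfolding stays_above_def by auto
    next
      case False then show ?thesis using height_P_W_ge[of k] g by simp
    qed
  qed
next
  assume i: "stays_above P p q"
  have hp: "height P' p = height P p" using height_P'_outside pq by simp
  show "stays_above P' p q" unfolding stays_above_def
  proof (intro allI impI)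
    fix k assume k: "p < k \<and> k \<le> q"
    show "height P' p < height P' k"
    proof (cases "k \<le> a \<or> a + 1 + L \<le> k")
      case True then show ?thesis using i k height_P'_outside[of k] hp unfolding stays_above_def by auto
    next
      case False
      then have "height P' k = height P (Suc k) + 1" using height_P'_inside by simp
      moreover have "height P (Suc k) > height P p" using i k pq False unfolding stays_above_def by auto
      ultimately show ?thesis using hp by simp
    qed
  qed
qed

lemma stays_above_W_W:
  assumes pq: "a < p" "p < q" "q \<le> a + L"
  shows "stays_above P' (p - 1) (q - 1) \<longleftrightarrow> stays_above P p q"
proof -
  have hp: "height P' (p - 1) = height P p + 1" using height_P'_inside[of "p - 1"] pq by simp
  have hk: "height P' k = height P (Suc k) + 1" if "p - 1 < k" "k \<le> q - 1" for k
    using height_P'_inside[of k] that pq by simp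
  show ?thesis unfolding stays_above_def
  proof
    assume i: "\<forall>k. p - 1 < k \<and> k \<le> q - 1 \<longrightarrow> height P' (p - 1) < height P' k"
    show "\<forall>k. p < k \<and> k \<le> q \<longrightarrow> height P p < height P k"
    proof (intro allI impI)
      fix k assume k: "p < k \<and> k \<le> q"
      have kk: "p - 1 < k - 1" "k - 1 \<le> q - 1" using k pq by auto
      then have "height P' (p - 1) < height P' (k - 1)" using i by blast
      moreover have "height P' (k - 1) = height P k + 1" using hk[OF kk] k by simp
      ultimately show "height P p < height P k" using hp by simp
    qed
  next
    assume i: "\<forall>k. p < k \<and> k \<le> q \<longrightarrow> height P p < height P k"
    show "\<forall>k. p - 1 < k \<and> k \<le> q - 1 \<longrightarrow> height P' (p - 1) < height P' k"
    proof (intro allI impI)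
      fix k assume k: "p - 1 < k \<and> k \<le> q - 1"
      then have "p < Suc k \<and> Suc k \<le> q" using pq by auto
      then have "height P p < height P (Suc k)" using i by blast
      then show "height P' (p - 1) < height P' k" using hp hk[of k] k by simp
    qed
  qed
qed

lemma not_stays_above_W_right:
  assumes pq: "a < p" "p \<le> a + L" "a + L < q"
  shows "\<not> stays_above P' (p - 1) q" "\<not> stays_above P p q"
proof -
  have hpge: "height P p \<ge> height P a - 1" using height_P_W_ge[of p] pq by simp
  show "\<not> stays_above P p q"
  proof
    assume "stays_above P p q"
    then have "height P p < height P (a + 1 + L)" using pq unfolding stays_above_def by simp
    then show False using height_P_after_W hpge by simp
  qed
  have e1: "height P' (a + L) = height P a" using height_P'_inside[of "a + L"] height_P_after_W by simp
  have e2: "height P' (p - 1) = height P p + 1" using height_P'_inside[of "p - 1"] pq by simp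
  show "\<not> stays_above P' (p - 1) q"
  proof
    assume "stays_above P' (p - 1) q"
    then have "height P' (p - 1) < height P' (a + L)" using pq unfolding stays_above_def by simp
    then show False using e1 e2 hpge by simp
  qed
qed

lemma stays_above_right_right:
  assumes pq: "a + L < p" "p < q"
  shows "stays_above P' p q \<longleftrightarrow> stays_above P p q"
  unfolding stays_above_def using height_P'_outside assms by auto

lemma stays_above_P'_iff:
  assumes p: "p < length P" "P ! p" and q: "q < length P" "P ! q" and pq: "p < q"
  shows "stays_above P' (shift p) (shift q) \<longleftrightarrow> stays_above P p q \<or> (p = p0 \<and> a < q \<and> q \<le> a + L)"
proof -
  have pa: "p \<noteq> a" "q \<noteq> a" using p q P_down by auto
  consider "p < a" | "a < p \<and> p \<le> a + L" | "a + L < p" using pa by linarith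
  then show ?thesis
  proof cases
    case 1
    consider "q < a" | "a < q \<and> q \<le> a + L" | "a + L < q" using pa by linarith
    then show ?thesis
    proof cases
      case 1
      then show ?thesis using stays_above_left_left[of p q] pq \<open>p < a\<close> unfolding shift_def by auto
    next
      case 2
      have ph: "shift p = p" "shift q = q - 1" using \<open>p < a\<close> 2 unfolding shift_def by auto
      show ?thesis using stays_above_left_W_dest[OF \<open>p < a\<close> _ _ p(2)] stays_above_left_WI[OF \<open>p < a\<close>] 2 ph by auto
    next
      case 3
      have ph: "shift p = p" "shift q = q" using \<open>p < a\<close> 3 unfolding shift_def by auto
      show ?thesis using stays_above_left_right[OF \<open>p < a\<close> 3] 3 ph by auto
    qed
  next
    case 2
    have pp0: "p \<noteq> p0" using 2 p0_props(1) by auto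
    show ?thesis
    proof (cases "q \<le> a + L")
      case True
      have ph: "shift p = p - 1" "shift q = q - 1" using 2 True pq unfolding shift_def by auto
      show ?thesis using stays_above_W_W[of p q] 2 True pq ph pp0 by auto
    next
      case False
      have ph: "shift p = p - 1" "shift q = q" using 2 False pq unfolding shift_def by auto
      show ?thesis using not_stays_above_W_right[of p q] 2 False ph by auto
    qed
  next
    case 3
    have ph: "shift p = p" "shift q = q" using 3 pq unfolding shift_def by auto
    show ?thesis using stays_above_right_right[OF 3 pq] ph 3 p0_props(1) by auto
  qed
qed

lemma dec_P'_iff:
  "(j, i) \<in> dec N P' \<longleftrightarrow> (j, i) \<in> dec N P \<or>
     (i \<in> {1..N} \<and> j \<in> {1..N} \<and> i < j \<and> up_pos P i = p0 \<and> a < up_pos P j \<and> up_pos P j \<le> a + L)"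
proof -
  have "(j, i) \<in> dec N P' \<longleftrightarrow> i \<in> {1..N} \<and> j \<in> {1..N} \<and> i < j \<and> stays_above P' (up_pos P' i) (up_pos P' j)"
    using dec_iff_stays_above[OF dyck_P'] by simp
  also have "\<dots> \<longleftrightarrow> i \<in> {1..N} \<and> j \<in> {1..N} \<and> i < j \<and>
     (stays_above P (up_pos P i) (up_pos P j) \<or> (up_pos P i = p0 \<and> a < up_pos P j \<and> up_pos P j \<le> a + L))"
  proof (intro iffI; elim conjE)
    assume ij: "i \<in> {1..N}" "j \<in> {1..N}" "i < j"
    have m: "stays_above P' (up_pos P' i) (up_pos P' j) \<longleftrightarrow>
      (stays_above P (up_pos P i) (up_pos P j) \<or> (up_pos P i = p0 \<and> a < up_pos P j \<and> up_pos P j \<le> a + L))"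
      using stays_above_P'_iff[OF dyck_up_pos(1,2)[OF d] dyck_up_pos(1,2)[OF d]] up_pos_P' up_pos_less_iff[OF d] ij by auto
    {
      assume "stays_above P' (up_pos P' i) (up_pos P' j)"
      then show "i \<in> {1..N} \<and> j \<in> {1..N} \<and> i < j \<and>
        (stays_above P (up_pos P i) (up_pos P j) \<or> (up_pos P i = p0 \<and> a < up_pos P j \<and> up_pos P j \<le> a + L))"
        using m ij by simp
    }
    {
      assume "stays_above P (up_pos P i) (up_pos P j) \<or> (up_pos P i = p0 \<and> a < up_pos P j \<and> up_pos P j \<le> a + L)"
      then show "i \<in> {1..N} \<and> j \<in> {1..N} \<and> i < j \<and> stays_above P' (up_pos P' i) (up_pos P' j)"
        using m ij by simp
    }
  qed
  also have "\<dots> \<longleftrightarrow> (j, i) \<in> dec N P \<or>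
     (i \<in> {1..N} \<and> j \<in> {1..N} \<and> i < j \<and> up_pos P i = p0 \<and> a < up_pos P j \<and> up_pos P j \<le> a + L)"
    using dec_iff_stays_above[OF d] by auto
  finally show ?thesis .
qed

definition "i0 = Suc (ups P p0)"

lemma up_pos_i0: "up_pos P i0 = p0" unfolding i0_def using up_pos_eqI[OF p0_less_length p0_props(2)] .

lemma i0_range: "i0 \<in> {1..N}"
proof -
  have "ups P (Suc p0) \<le> N" using ups_le_dyck[OF d] .
  then show ?thesis using ups_Suc[OF p0_less_length] p0_props(2) unfolding i0_def by simp
qed

lemma arch_end_i0: "arch_end P i0 = ups P a"
  unfolding arch_end_def using up_pos_i0 p0_props(3) by simp

lemma arch_end_rotated_other:
  assumes i: "i \<in> {1..N}" and ne: "i \<noteq> i0"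
  shows "arch_end P' i = arch_end P i"
proof -
  have "up_pos P i \<noteq> p0"
  proof
    assume "up_pos P i = p0"
    then have "i - 1 = ups P p0" using dyck_up_pos(3)[OF d] i by fastforce
    then show False using ne i unfolding i0_def by auto
  qed
  then have "(i < j \<and> j \<le> arch_end P' i) \<longleftrightarrow> (i < j \<and> j \<le> arch_end P i)" for j
    using dec_P'_iff[of j i] dec_row_iff[OF dyck_P' i] dec_row_iff[OF d i] by auto
  moreover have "i \<le> arch_end P' i" "i \<le> arch_end P i"
    using arch_end_bounds(1)[OF dyck_P'] arch_end_bounds(1)[OF d] i by auto
  ultimately show ?thesis using eq_of_same_interval by blast
qed

lemma arch_end_rotated_i0: "arch_end P' i0 = ups P (a + 1 + L)"
proof -
  define c where "c = ups P (a + 1 + L)"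
  have ca: "ups P a \<le> c" unfolding c_def by (rule ups_mono) simp
  have ic: "i0 \<le> c" using arch_end_bounds[OF d] i0_range arch_end_i0 ca by fastforce
  have "(i0 < j \<and> j \<le> arch_end P' i0) \<longleftrightarrow> (i0 < j \<and> j \<le> c)" for j
  proof -
    have "(j, i0) \<in> dec N P' \<longleftrightarrow> (i0 < j \<and> j \<le> ups P a) \<or>
        (j \<in> {1..N} \<and> i0 < j \<and> a < up_pos P j \<and> up_pos P j \<le> a + L)"
      using dec_P'_iff[of j i0] dec_row_iff[OF d i0_range] arch_end_i0 up_pos_i0 i0_range by auto
    also have "\<dots> \<longleftrightarrow> (i0 < j \<and> j \<le> ups P a) \<or> (j \<in> {1..N} \<and> i0 < j \<and> ups P a < j \<and> j \<le> c)"
    proof -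
      have "a < up_pos P j \<longleftrightarrow> ups P a < j" if "j \<in> {1..N}"
        using down_less_up_pos_iff[OF d _ _ P_down(2,1)] that by auto
      moreover have "up_pos P j \<le> a + L \<longleftrightarrow> j \<le> c" if "j \<in> {1..N}"
      proof -
        have "up_pos P j < a + 1 + L \<longleftrightarrow> Suc (ups P (up_pos P j)) \<le> ups P (a + 1 + L)"
          using up_less_iff_ups[OF dyck_up_pos(1,2)[OF d]] that by auto
        then show ?thesis using dyck_up_pos(3)[OF d] that unfolding c_def by auto
      qed
      ultimately show ?thesis by blast
    qed
    also have "\<dots> \<longleftrightarrow> i0 < j \<and> j \<le> c"
      using ca ups_le_dyck[OF d, of "a + 1 + L"] i0_range unfolding c_def by auto
    finally show ?thesis using dec_row_iff[OF dyck_P' i0_range] by simp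
  qed
  then show ?thesis using eq_of_same_interval[OF _ ic] arch_end_bounds[OF dyck_P'] i0_range
    unfolding c_def by auto
qed

lemma arch_end_rotated:
  assumes "i \<in> {1..N}"
  shows "arch_end P' i = (if i = i0 then ups P (a + 1 + L) else arch_end P i)"
  using arch_end_rotated_other[OF assms] arch_end_rotated_i0 by simp

lemma arch_end_rotated_ge: "i \<in> {1..N} \<Longrightarrow> arch_end P i \<le> arch_end P' i"
  using arch_end_rotated arch_end_i0 ups_mono[of a "a + 1 + L" P] by auto

end

lemma rotation_arch_end:
  assumes d: "dyck N P" and r: "rotation P Q"
  shows "dyck N Q \<and> (\<forall>i\<in>{1..N}. arch_end P i \<le> arch_end Q i)"
proof -
  obtain xs W zs where P: "P = xs @ [False] @ W @ zs" and bW: "balanced W" and Q: "Q = xs @ W @ [False] @ zs"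
    using r unfolding rotation_def by blast
  interpret rotation_site N P xs W zs using d P bW by unfold_locales
  show ?thesis using dyck_P' arch_end_rotated_ge Q unfolding P'_def by simp
qed

lemma tamari_le_arch_end:
  assumes d: "dyck N P" and t: "tamari_le P Q"
  shows "dyck N Q \<and> (\<forall>i\<in>{1..N}. arch_end P i \<le> arch_end Q i)"
proof -
  have "(P, Q) \<in> {(a, b). rotation a b}\<^sup>*" using t unfolding tamari_le_def .
  then show ?thesis
  proof (induction rule: rtrancl_induct)
    case base then show ?case using d by simp
  next
    case (step y z)
    then have "dyck N z \<and> (\<forall>i\<in>{1..N}. arch_end y i \<le> arch_end z i)" using rotation_arch_end by blast
    then show ?case using step.IH by (meson order.trans)
  qed
qed

lemma first_difference:
  assumes "length u = length v" "u \<noteq> v"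
  shows "\<exists>q<length u. take q u = take q v \<and> u ! q \<noteq> v ! q"
proof -
  have ex: "\<exists>q. q < length u \<and> u ! q \<noteq> v ! q" using assms nth_equalityI by blast
  define q where "q = (LEAST q. q < length u \<and> u ! q \<noteq> v ! q)"
  have q: "q < length u" "u ! q \<noteq> v ! q" using LeastI_ex[OF ex] unfolding q_def by auto
  have "\<forall>k<q. u ! k = v ! k"
  proof (intro allI impI)
    fix k assume k: "k < q"
    then have "\<not> (k < length u \<and> u ! k \<noteq> v ! k)" unfolding q_def by (rule not_less_Least)
    then show "u ! k = v ! k" using k q(1) by simp
  qed
  then have "take q u = take q v" using q(1) assms(1) by (intro nth_equalityI) auto
  then show ?thesis using q by blast
qed

lemma take_eq_shorter: "take q u = take q v \<Longrightarrow> k \<le> q \<Longrightarrow> take k u = take k v"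
proof -
  assume a: "take q u = take q v" "k \<le> q"
  have "take k u = take k (take q u)" "take k v = take k (take q v)" using a(2) by (simp_all add: min_def)
  then show ?thesis using a(1) by simp
qed

lemma take_eq_height_eq: "take q u = take q v \<Longrightarrow> k \<le> q \<Longrightarrow> height u k = height v k"
  unfolding height_def using take_eq_shorter by metis

lemma take_ups_eq: "take q u = take q v \<Longrightarrow> k \<le> q \<Longrightarrow> ups u k = ups v k"
  unfolding ups_def using take_eq_shorter by metis

lemma arch_end_differs_at_first_difference:
  assumes d: "dyck N u" and d': "dyck N v" and tq: "take q u = take q v"
    and q: "q < length u" "u ! q" "\<not> v ! q"
  shows "\<exists>i\<in>{1..N}. arch_end u i \<noteq> arch_end v i"
proof -
  have lv: "length v = length u" using dyck_length[OF d] dyck_length[OF d'] by simp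
  obtain p0 where p0: "p0 < q" "v ! p0" "match_pos v p0 = q" using down_is_matched[OF d' _ q(3)] q lv by auto
  have p0_less_length: "p0 < length v" "p0 < length u" using p0 q lv by auto
  have "take q u ! p0 = take q v ! p0" using tq by simp
  then have up0: "u ! p0" using p0 by simp
  have hs: "height u k = height v k" if "k \<le> q" for k using take_eq_height_eq[OF tq that] .
  have cs: "ups u k = ups v k" if "k \<le> q" for k using take_ups_eq[OF tq that] .
  define i where "i = Suc (ups v p0)"
  have upv: "up_pos v i = p0" unfolding i_def using up_pos_eqI[OF p0_less_length(1) p0(2)] .
  have upu: "up_pos u i = p0" unfolding i_def using up_pos_eqI[OF p0_less_length(2) up0] cs[of p0] p0 by simp
  have iN: "i \<in> {1..N}" unfolding i_def using ups_le_dyck[OF d', of "Suc p0"] ups_Suc[OF p0_less_length(1)] p0(2) by simp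
  have Ev: "arch_end v i = ups v q" unfolding arch_end_def upv p0 by simp
  have "stays_above u p0 (Suc q)"
    unfolding stays_above_def
  proof (intro allI impI)
    fix k assume k: "p0 < k \<and> k \<le> Suc q"
    have hq: "height v p0 < height v q" using match_pos_props(5)[OF d' p0_less_length(1) p0(2)] p0 by simp
    show "height u p0 < height u k"
    proof (cases "k \<le> q")
      case True
      then show ?thesis using match_pos_props(5)[OF d' p0_less_length(1) p0(2)] p0 k hs[of k] hs[of p0] by simp
    next
      case False
      then have "k = Suc q" using k by simp
      then show ?thesis using height_Suc[OF q(1)] q(2) hq hs[of q] hs[of p0] p0 by simp
    qed
  qed
  then have "Suc q \<le> match_pos u p0" using stays_above_iff_le_match[OF d p0_less_length(2) up0, of "Suc q"] p0 by simp
  then have "ups u (Suc q) \<le> arch_end u i" unfolding arch_end_def upu by (simp add: ups_mono)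
  moreover have "ups u (Suc q) = ups v q + 1" using ups_Suc[OF q(1)] q(2) cs[of q] by simp
  ultimately have "arch_end u i \<noteq> arch_end v i" using Ev by simp
  then show ?thesis using iN by blast
qed

lemma arch_end_inj:
  assumes d: "dyck N u" and d': "dyck N v" and eq: "\<forall>i\<in>{1..N}. arch_end u i = arch_end v i"
  shows "u = v"
proof (rule ccontr)
  assume ne: "u \<noteq> v"
  have l: "length u = length v" using dyck_length[OF d] dyck_length[OF d'] by simp
  obtain q where q: "q < length u" "take q u = take q v" "u ! q \<noteq> v ! q" using first_difference[OF l ne] by blast
  show False
  proof (cases "u ! q")
    case True
    then show False using arch_end_differs_at_first_difference[OF d d' q(2) q(1) True] q(3) eq by auto
  next
    case False
    then have "v ! q" using q(3) by simp
    then show False using arch_end_differs_at_first_difference[OF d' d q(2)[symmetric]] q l False eq by auto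
  qed
qed

definition zigzag :: "nat \<Rightarrow> bool list" where "zigzag N = map even [0..<2 * N]"

lemma count_list_map_even: "count_list (map even [0..<m]) True = (m + 1) div 2"
  by (induction m) auto

lemma ups_zigzag: "k \<le> 2 * N \<Longrightarrow> ups (zigzag N) k = (k + 1) div 2"
  unfolding ups_def zigzag_def by (simp add: take_map count_list_map_even min_def)

lemma dyck_zigzag: "dyck N (zigzag N)"
  unfolding dyck_def
proof (intro conjI allI impI)
  show "length (zigzag N) = 2 * N" unfolding zigzag_def by simp
  show "count_list (zigzag N) True = N" unfolding zigzag_def by (simp add: count_list_map_even)
  fix k assume k: "k \<le> length (zigzag N)"
  then have "k \<le> 2 * N" unfolding zigzag_def by simp
  then show "0 \<le> height (zigzag N) k" using height_ups[of k "zigzag N"] k ups_zigzag[of k N] by simp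
qed

lemma match_pos_next:
  assumes d: "dyck N w" and p: "p < length w" "w ! p" and s: "Suc p < length w" "\<not> w ! Suc p"
  shows "match_pos w p = Suc p"
proof -
  have "Suc p \<le> match_pos w p" using match_pos_props(1)[OF d p] by simp
  moreover have "\<not> Suc (Suc p) \<le> match_pos w p"
  proof
    assume "Suc (Suc p) \<le> match_pos w p"
    then have "height w p < height w (Suc (Suc p))" using match_pos_props(5)[OF d p] by simp
    then show False using height_Suc[OF p(1)] height_Suc[OF s(1)] p(2) s(2) by simp
  qed
  ultimately show ?thesis by simp
qed

lemma arch_end_zigzag: "i \<in> {1..N} \<Longrightarrow> arch_end (zigzag N) i = i"
proof -
  assume i: "i \<in> {1..N}"
  define p where "p = 2 * (i - 1)"
  have pl: "p < length (zigzag N)" "Suc p < length (zigzag N)" using i unfolding p_def zigzag_def by auto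
  have pt: "zigzag N ! p" "\<not> zigzag N ! Suc p" using pl unfolding p_def zigzag_def by auto
  have cp: "ups (zigzag N) p = i - 1" using ups_zigzag[of p N] pl unfolding p_def zigzag_def by simp
  have "up_pos (zigzag N) i = p" using up_pos_eqI[OF pl(1) pt(1)] cp i by simp
  moreover have "match_pos (zigzag N) p = Suc p" using match_pos_next[OF dyck_zigzag pl(1) pt(1) pl(2) pt(2)] .
  moreover have "ups (zigzag N) (Suc p) = i" using ups_zigzag[of "Suc p" N] pl i unfolding p_def zigzag_def by auto
  ultimately show ?thesis unfolding arch_end_def by simp
qed

lemma height_split_drop:
  assumes "u \<le> length w"
  shows "height w (u + r) = height w u + height (drop u w) r"
proof -
  have "w = take u w @ drop u w" by simp
  then have "height w (length (take u w) + r) = height (take u w) (length (take u w)) + height (drop u w) r"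
    by (metis height_append_right)
  moreover have "height (take u w) (length (take u w)) = height w u" using assms by (simp add: height_def)
  ultimately show ?thesis using assms by simp
qed

lemma height_take: "r \<le> L \<Longrightarrow> height (take L w) r = height w r"
  unfolding height_def by (simp add: min_def)

lemma down_before_next_arch:
  assumes d: "dyck N P" and i: "i \<in> {1..N}" and lt: "arch_end P i < N"
  shows "match_pos P (up_pos P i) < up_pos P (Suc (arch_end P i))"
    and "\<not> P ! (up_pos P (Suc (arch_end P i)) - 1)"
proof -
  define k where "k = Suc (arch_end P i)"
  define m where "m = match_pos P (up_pos P i)"
  have kN: "k \<in> {1..N}" using lt unfolding k_def by auto
  have ui: "up_pos P i < length P" "P ! up_pos P i" using dyck_up_pos[OF d] i by auto
  have m: "m < length P" "\<not> P ! m" "ups P m = k - 1"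
    using match_pos_props(2,3)[OF d ui] unfolding m_def k_def arch_end_def by auto
  have uk: "up_pos P k < length P" "ups P (up_pos P k) = k - 1" using dyck_up_pos[OF d] kN by auto
  have mk: "m < up_pos P k" using down_less_up_pos_iff[OF d _ _ m(1,2)] kN m(3) unfolding k_def by simp
  then show "match_pos P (up_pos P i) < up_pos P (Suc (arch_end P i))" unfolding m_def k_def .
  show "\<not> P ! (up_pos P (Suc (arch_end P i)) - 1)"
  proof
    assume "P ! (up_pos P (Suc (arch_end P i)) - 1)"
    then have "ups P (up_pos P k) = Suc (ups P (up_pos P k - 1))"
      using ups_Suc[of "up_pos P k - 1" P] mk uk(1) unfolding k_def by simp
    moreover have "ups P m \<le> ups P (up_pos P k - 1)" using mk by (simp add: ups_mono)
    ultimately show False using m(3) uk(2) by simp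
  qed
qed

lemma arch_factor_prime:
  assumes d: "dyck N P" and u: "u < length P" "P ! u"
  defines "W \<equiv> take (Suc (match_pos P u) - u) (drop u P)"
  shows "length W = Suc (match_pos P u) - u" "balanced W" "W \<noteq> []" "hd W"
    and "\<forall>r. 0 < r \<and> r < length W \<longrightarrow> \<not> balanced (take r W)"
proof -
  define mk where "mk = match_pos P u"
  define LW where "LW = Suc mk - u"
  have mk: "u < mk" "mk < length P" "height P (Suc mk) = height P u"
    "\<And>j. u < j \<Longrightarrow> j \<le> mk \<Longrightarrow> height P j > height P u"
    using match_pos_props[OF d u] unfolding mk_def by auto
  have lenW: "length W = LW" unfolding W_def LW_def mk_def[symmetric] using mk by simp
  then show "length W = Suc (match_pos P u) - u" unfolding LW_def mk_def .
  have hWr: "height W r = height P (u + r) - height P u" if "r \<le> LW" for r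
    using height_split_drop[of u P r] u(1) height_take[OF that]
    unfolding W_def LW_def mk_def by simp
  have hWL: "height W LW = 0" using hWr[of LW] mk unfolding LW_def by simp
  have hWpos: "height W r > 0" if "0 < r" "r < LW" for r
    using hWr[of r] mk(4)[of "u + r"] that unfolding LW_def by simp
  have hWnn: "height W r \<ge> 0" if "r \<le> LW" for r
    using hWpos[of r] hWL that by (cases "r = 0"; cases "r = LW") auto
  have cW: "2 * int (ups W LW) = int LW" using double_ups_eq[of LW W] hWL lenW by simp
  then have "even LW" by presburger
  moreover have "count_list W True = LW div 2" using cW lenW ups_beyond_length[of W LW] by simp
  ultimately show "balanced W" unfolding balanced_def dyck_def using lenW hWnn by auto
  show "W \<noteq> []" using lenW mk unfolding LW_def by auto
  then show "hd W" unfolding W_def using u(2) by (simp add: hd_conv_nth)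
  show "\<forall>r. 0 < r \<and> r < length W \<longrightarrow> \<not> balanced (take r W)"
  proof (intro allI impI notI)
    fix r assume r: "0 < r \<and> r < length W" and "balanced (take r W)"
    then have "height (take r W) (length (take r W)) = 0"
      using dyck_height_end unfolding balanced_def by blast
    then have "height W r = 0" using r height_take[of r r W] by simp
    then show False using hWpos[of r] r lenW by simp
  qed
qed

lemma rotation_site_at:
  assumes d: "dyck N P" and k: "k \<in> {1..N}"
    and pos: "0 < up_pos P k" and down: "\<not> P ! (up_pos P k - 1)"
  obtains xs W zs where "rotation_site N P xs W zs" "rotation P (xs @ W @ [False] @ zs)"
    "length xs = up_pos P k - 1" "ups P (length xs + 1 + length W) = arch_end P k"
proof -
  define u where "u = up_pos P k"
  define mk where "mk = match_pos P u"
  have u: "u < length P" "P ! u" using dyck_up_pos[OF d] k unfolding u_def by auto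
  have mk: "u < mk" "mk < length P" "\<not> P ! mk" using match_pos_props[OF d u] unfolding mk_def by auto
  define W where "W = take (Suc mk - u) (drop u P)"
  define xs where "xs = take (u - 1) P"
  define zs where "zs = drop (Suc mk) P"
  note W = arch_factor_prime[OF d u, folded mk_def, folded W_def]
  have Peq: "P = xs @ [False] @ W @ zs"
  proof -
    have "drop (u - 1) P = P ! (u - 1) # drop u P" using pos u Cons_nth_drop_Suc[of "u - 1" P]
      unfolding u_def by simp
    moreover have "drop u P = W @ zs"
      using mk append_take_drop_id[of "Suc mk - u" "drop u P"] unfolding W_def zs_def by simp
    ultimately have "drop (u - 1) P = [False] @ W @ zs" using down unfolding u_def by simp
    then show ?thesis unfolding xs_def by (metis append_take_drop_id)
  qed
  have "rotation_site N P xs W zs" using d Peq W(2) by unfold_locales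
  moreover have "rotation P (xs @ W @ [False] @ zs)" unfolding rotation_def using Peq W by blast
  moreover have "length xs = up_pos P k - 1" using u unfolding xs_def u_def by simp
  moreover have "ups P (length xs + 1 + length W) = arch_end P k"
  proof -
    have "length xs + 1 + length W = Suc mk" using pos u mk W(1) unfolding xs_def u_def by simp
    then show ?thesis using ups_Suc[OF mk(2)] mk(3) unfolding arch_end_def u_def[symmetric] mk_def[symmetric] by simp
  qed
  ultimately show ?thesis using that by blast
qed

lemma matched_before_next_arch:
  assumes d: "dyck N P" and i: "i \<in> {1..N}" and lt: "arch_end P i < N" and j: "j \<in> {1..N}"
    and m: "match_pos P (up_pos P j) = up_pos P (Suc (arch_end P i)) - 1"
  shows "j \<le> i" "arch_end P j = arch_end P i"
proof -
  define k where "k = Suc (arch_end P i)"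
  have kN: "k \<in> {1..N}" using lt unfolding k_def by auto
  note after = down_before_next_arch[OF d i lt, folded k_def]
  have "ups P (up_pos P k) = ups P (up_pos P k - 1)"
    using ups_Suc[of "up_pos P k - 1" P] after dyck_up_pos(1)[OF d, of k] kN by (simp add: Suc_diff_1)
  then show EPj: "arch_end P j = arch_end P i"
    using dyck_up_pos(3)[OF d, of k] kN m unfolding arch_end_def k_def by simp
  show "j \<le> i"
  proof (rule ccontr)
    assume "\<not> j \<le> i"
    moreover have "j \<le> arch_end P i" using arch_end_bounds(1)[OF d, of j] j EPj by auto
    ultimately have "(j, i) \<in> dec N P" using dec_eq_dec_vec[OF d] i unfolding dec_vec_def by auto
    then have "match_pos P (up_pos P j) < match_pos P (up_pos P i)"
      using match_pos_nested[OF d dyck_up_pos(1,2)[OF d] dyck_up_pos(1,2)[OF d]] i j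
      unfolding dec_def by auto
    then show False using m after(1) unfolding k_def by simp
  qed
qed

lemma max_deficient_index:
  assumes d: "dyck N P" and v: "bracket_vector N E" and le: "\<forall>i\<in>{1..N}. arch_end P i \<le> E i"
    and ne: "\<exists>i\<in>{1..N}. arch_end P i < E i"
  obtains i where "i \<in> {1..N}" "arch_end P i < E i"
    "arch_end P (Suc (arch_end P i)) = E (Suc (arch_end P i))"
proof -
  define S where "S = {i\<in>{1..N}. arch_end P i < E i}"
  have finS: "finite S" and neS: "S \<noteq> {}" using ne unfolding S_def by auto
  define i where "i = Max S"
  have iN: "i \<in> {1..N}" and ilt: "arch_end P i < E i"
    using Max_in[OF finS neS] unfolding i_def S_def by auto
  have "i < Suc (arch_end P i)" "Suc (arch_end P i) \<le> N"
    using arch_end_bounds[OF d, of i] iN ilt bracket_vectorD(2)[OF v iN] by auto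
  then have "Suc (arch_end P i) \<notin> S" using Max_ge[OF finS] unfolding i_def by fastforce
  moreover have kN: "Suc (arch_end P i) \<in> {1..N}" using \<open>Suc (arch_end P i) \<le> N\<close> by simp
  ultimately have "\<not> arch_end P (Suc (arch_end P i)) < E (Suc (arch_end P i))" unfolding S_def by blast
  then have "arch_end P (Suc (arch_end P i)) = E (Suc (arch_end P i))" using le kN by force
  then show ?thesis using that iN ilt by blast
qed

lemma rotation_step:
  assumes d: "dyck N P" and v: "bracket_vector N E" and le: "\<forall>i\<in>{1..N}. arch_end P i \<le> E i"
    and ne: "\<exists>i\<in>{1..N}. arch_end P i < E i"
  obtains P' where "rotation P P'" "dyck N P'" "\<forall>i\<in>{1..N}. arch_end P' i \<le> E i"
    "(\<Sum>i\<in>{1..N}. E i - arch_end P' i) < (\<Sum>i\<in>{1..N}. E i - arch_end P i)"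
proof -
  obtain i where iN: "i \<in> {1..N}" and ilt: "arch_end P i < E i"
    and Ek: "arch_end P (Suc (arch_end P i)) = E (Suc (arch_end P i))"
    using max_deficient_index[OF d v le ne] .
  define k where "k = Suc (arch_end P i)"
  have iE: "i \<le> arch_end P i" using arch_end_bounds[OF d] iN by auto
  have kN: "k \<in> {1..N}" "i < k" "k \<le> E i" "arch_end P i < N"
    using ilt bracket_vectorD(2)[OF v iN] iE unfolding k_def by auto
  have after: "match_pos P (up_pos P i) < up_pos P k" "\<not> P ! (up_pos P k - 1)"
    using down_before_next_arch[OF d iN kN(4)] unfolding k_def by auto
  obtain xs W zs where R: "rotation_site N P xs W zs" and rotP: "rotation P (xs @ W @ [False] @ zs)"
    and lxs: "length xs = up_pos P k - 1" and c_end: "ups P (length xs + 1 + length W) = arch_end P k"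
    using rotation_site_at[OF d kN(1) _ after(2)] after(1) by (metis less_nat_zero_code not_gr_zero)
  interpret rotation_site N P xs W zs by (rule R)
  have P': "rotation_site.P' xs W zs = xs @ W @ [False] @ zs" using rotation_site.P'_def[OF R] .
  have EP'i0: "arch_end (xs @ W @ [False] @ zs) i0 = E k"
    using arch_end_rotated[OF i0_range] P' c_end Ek
    unfolding rotation_site.a_def[OF R] rotation_site.L_def[OF R] k_def by simp
  have "match_pos P (up_pos P i0) = up_pos P k - 1"
    using up_pos_i0 p0_props(3) lxs unfolding rotation_site.a_def[OF R] by simp
  then have i0: "i0 \<le> i" "arch_end P i0 = k - 1"
    using matched_before_next_arch[OF d iN kN(4) i0_range] unfolding k_def by auto
  have Eki0: "E k \<le> E i0"
  proof (cases "i0 = i")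
    case True then show ?thesis using bracket_vectorD(3)[OF v iN] kN by simp
  next
    case False
    then have "i0 < i" "i \<le> E i0" using i0 le i0_range iE unfolding k_def by force+
    then have "E i \<le> E i0" using bracket_vectorD(3)[OF v i0_range] by blast
    then show ?thesis using bracket_vectorD(3)[OF v i0_range] i0 kN by simp
  qed
  have "\<forall>j\<in>{1..N}. arch_end (xs @ W @ [False] @ zs) j \<le> E j"
    using arch_end_rotated P' le EP'i0 Eki0 by auto
  moreover have "(\<Sum>j\<in>{1..N}. E j - arch_end (xs @ W @ [False] @ zs) j) < (\<Sum>j\<in>{1..N}. E j - arch_end P j)"
  proof (rule sum_strict_mono_ex1)
    show "\<forall>j\<in>{1..N}. E j - arch_end (xs @ W @ [False] @ zs) j \<le> E j - arch_end P j"
      using arch_end_rotated_ge P' by (simp add: diff_le_mono2)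
    have "arch_end P k \<ge> k" using arch_end_bounds[OF d] kN by auto
    then show "\<exists>j\<in>{1..N}. E j - arch_end (xs @ W @ [False] @ zs) j < E j - arch_end P j"
      using EP'i0 i0 Eki0 Ek kN i0_range unfolding k_def by force
  qed simp
  ultimately show ?thesis using that rotP dyck_P' P' by simp
qed

lemma tamari_climb_to:
  assumes v: "bracket_vector N E"
  shows "dyck N P \<Longrightarrow> \<forall>i\<in>{1..N}. arch_end P i \<le> E i \<Longrightarrow>
    \<exists>Q. tamari_le P Q \<and> dyck N Q \<and> (\<forall>i\<in>{1..N}. arch_end Q i = E i)"
proof (induction "\<Sum>i\<in>{1..N}. E i - arch_end P i" arbitrary: P rule: less_induct)
  case less
  show ?case
  proof (cases "\<exists>i\<in>{1..N}. arch_end P i < E i")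
    case False
    then have "\<forall>i\<in>{1..N}. arch_end P i = E i" using less.prems by force
    then show ?thesis using less.prems unfolding tamari_le_def by blast
  next
    case True
    obtain P' where P': "rotation P P'" "dyck N P'" "\<forall>i\<in>{1..N}. arch_end P' i \<le> E i"
      "(\<Sum>i\<in>{1..N}. E i - arch_end P' i) < (\<Sum>i\<in>{1..N}. E i - arch_end P i)"
      using rotation_step[OF less.prems(1) v less.prems(2) True] by blast
    obtain Q where Q: "tamari_le P' Q" "dyck N Q" "\<forall>i\<in>{1..N}. arch_end Q i = E i"
      using less.hyps[OF P'(4) P'(2,3)] by blast
    have "tamari_le P Q" using P'(1) Q(1) unfolding tamari_le_def
      by (meson case_prodI converse_rtrancl_into_rtrancl mem_Collect_eq)
    then show ?thesis using Q by blast
  qed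
qed

lemma ups_all_up:
  assumes "\<forall>k. x \<le> k \<and> k < y \<longrightarrow> w ! k" "x \<le> y" "y \<le> length w"
  shows "ups w y = ups w x + (y - x)"
  using assms
proof (induction y)
  case 0 then show ?case by simp
next
  case (Suc y)
  show ?case
  proof (cases "x = Suc y")
    case True then show ?thesis by simp
  next
    case False
    then have "x \<le> y" using Suc.prems by simp
    then have "ups w y = ups w x + (y - x)" using Suc by simp
    moreover have "w ! y" using Suc.prems \<open>x \<le> y\<close> by simp
    ultimately show ?thesis using ups_Suc[of y w] Suc.prems \<open>x \<le> y\<close> by simp
  qed
qed

lemma ups_no_up:
  assumes "\<forall>k. x \<le> k \<and> k < y \<longrightarrow> \<not> w ! k" "x \<le> y" "y \<le> length w"
  shows "ups w y = ups w x"
  using assms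
proof (induction y)
  case 0 then show ?case by simp
next
  case (Suc y)
  show ?case
  proof (cases "x = Suc y")
    case True then show ?thesis by simp
  next
    case False
    then have "x \<le> y" using Suc.prems by simp
    then have "ups w y = ups w x" using Suc by simp
    moreover have "\<not> w ! y" using Suc.prems \<open>x \<le> y\<close> by simp
    ultimately show ?thesis using ups_Suc[of y w] Suc.prems \<open>x \<le> y\<close> by simp
  qed
qed

definition run_end :: "bool list \<Rightarrow> nat \<Rightarrow> bool" where
  "run_end w p \<longleftrightarrow> p < length w \<and> w ! p \<and> (Suc p = length w \<or> \<not> w ! Suc p)"

lemma dvd_ups_at_run_start:
  assumes h: "\<forall>p. run_end w p \<and> p < a \<longrightarrow> (m::nat) dvd ups w (Suc p)" and a: "a \<le> length w"
    and b: "a = 0 \<or> \<not> w ! (a - 1)"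
  shows "m dvd ups w a"
proof (cases "\<exists>p<a. w ! p")
  case False
  then have "ups w a = ups w 0" using ups_no_up[of 0 a w] a by auto
  then show ?thesis by (simp add: ups_def)
next
  case True
  define T where "T = {p. p < a \<and> w ! p}"
  have fin: "finite T" unfolding T_def by simp
  have ne: "T \<noteq> {}" using True unfolding T_def by auto
  define p where "p = Max T"
  have pT: "p < a" "w ! p" using Max_in[OF fin ne] unfolding p_def T_def by auto
  have pmax: "\<And>q. q < a \<Longrightarrow> w ! q \<Longrightarrow> q \<le> p" using Max_ge[OF fin] unfolding p_def T_def by auto
  have sp: "Suc p \<noteq> a" using b pT by auto
  then have sp2: "Suc p < a" using pT by simp
  have nT: "\<forall>k. Suc p \<le> k \<and> k < a \<longrightarrow> \<not> w ! k" using pmax by fastforce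
  have "run_end w p" unfolding run_end_def using pT sp2 a nT by auto
  then have "m dvd ups w (Suc p)" using h pT by blast
  moreover have "ups w a = ups w (Suc p)" using ups_no_up[OF nT] sp2 a by simp
  ultimately show ?thesis by simp
qed

lemma run_start_exists:
  assumes "w ! p"
  obtains a where "a \<le> p" "\<forall>k. a \<le> k \<and> k \<le> p \<longrightarrow> w ! k" "a = 0 \<or> \<not> w ! (a - 1)"
proof -
  define Q where "Q a \<longleftrightarrow> (\<forall>k. a \<le> k \<and> k \<le> p \<longrightarrow> w ! k)" for a
  have Qp: "Q p" unfolding Q_def using assms by auto
  define a where "a = (LEAST a. Q a)"
  have Qa: "Q a" and ap: "a \<le> p" unfolding a_def using LeastI[of Q p] Least_le[of Q p] Qp by auto
  have "a = 0 \<or> \<not> w ! (a - 1)"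
  proof (rule ccontr)
    assume "\<not> (a = 0 \<or> \<not> w ! (a - 1))"
    then have "a > 0" "w ! (a - 1)" by auto
    have "Q (a - 1)" unfolding Q_def
    proof (intro allI impI)
      fix k assume "a - 1 \<le> k \<and> k \<le> p"
      then show "w ! k" using Qa \<open>w ! (a - 1)\<close> unfolding Q_def by (cases "k = a - 1") auto
    qed
    then have "a \<le> a - 1" unfolding a_def by (rule Least_le)
    then show False using \<open>a > 0\<close> by simp
  qed
  then show ?thesis using that ap Qa unfolding Q_def by blast
qed

lemma runs_div_run_end_dvd:
  assumes r: "runs_div m w"
  shows "run_end w p \<Longrightarrow> m dvd ups w (Suc p)"
proof (induction p rule: less_induct)
  case (less p)
  have pl: "p < length w" "w ! p" using less.prems unfolding run_end_def by auto
  obtain a where ap: "a \<le> p" and run: "\<forall>k. a \<le> k \<and> k \<le> p \<longrightarrow> w ! k"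
    and start: "a = 0 \<or> \<not> w ! (a - 1)"
    using run_start_exists[OF pl(2)] by blast
  have allT: "\<forall>k. a \<le> k \<and> k < Suc p \<longrightarrow> w ! k" using run by auto
  have "a \<le> Suc p \<and> Suc p \<le> length w \<and> (\<forall>k. a \<le> k \<and> k < Suc p \<longrightarrow> w ! k) \<and>
      (a = 0 \<or> \<not> w ! (a - 1)) \<and> (Suc p = length w \<or> \<not> w ! Suc p)"
    using ap pl allT start less.prems unfolding run_end_def by auto
  then have "m dvd (Suc p - a)" using r unfolding runs_div_def by blast
  moreover have "m dvd ups w a"
    using dvd_ups_at_run_start[of w a m] less.IH ap pl start by auto
  moreover have "ups w (Suc p) = ups w a + (Suc p - a)" using ups_all_up[OF allT] ap pl by simp
  ultimately show ?case by simp
qed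

lemma runs_divI:
  assumes h: "\<forall>p. run_end w p \<longrightarrow> (m::nat) dvd ups w (Suc p)"
  shows "runs_div m w"
  unfolding runs_div_def
proof (intro allI impI)
  fix a b assume ab: "a \<le> b \<and> b \<le> length w \<and> (\<forall>k. a \<le> k \<and> k < b \<longrightarrow> w ! k) \<and>
      (a = 0 \<or> \<not> w ! (a - 1)) \<and> (b = length w \<or> \<not> w ! b)"
  show "m dvd (b - a)"
  proof (cases "a = b")
    case True then show ?thesis by simp
  next
    case False
    then have lt: "a < b" using ab by simp
    have "run_end w (b - 1)" unfolding run_end_def using ab lt by auto
    then have "m dvd ups w (Suc (b - 1))" using h by blast
    then have "m dvd ups w b" using lt by simp
    moreover have "m dvd ups w a" using dvd_ups_at_run_start[of w a m] h ab by auto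
    moreover have "ups w b = ups w a + (b - a)" using ups_all_up[of a b w] ab by simp
    ultimately show ?thesis by (simp add: dvd_add_right_iff)
  qed
qed

lemma runs_div_iff_run_end: "runs_div m w \<longleftrightarrow> (\<forall>p. run_end w p \<longrightarrow> m dvd ups w (Suc p))"
  using runs_div_run_end_dvd runs_divI by blast

lemma less_arch_end_iff:
  assumes d: "dyck N w" and l: "l \<in> {1..N}"
  shows "l < arch_end w l \<longleftrightarrow> Suc (up_pos w l) < length w \<and> w ! Suc (up_pos w l)"
proof
  assume lt: "l < arch_end w l"
  have up: "up_pos w l < length w" "w ! up_pos w l" "ups w (up_pos w l) = l - 1" using dyck_up_pos[OF d] l by auto
  have lN: "Suc l \<in> {1..N}" using lt arch_end_bounds[OF d] l by fastforce
  have "(Suc l, l) \<in> dec N w" using dec_eq_dec_vec[OF d] lt l unfolding dec_vec_def by auto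
  then have dd: "up_pos w l < up_pos w (Suc l)" "up_pos w (Suc l) < match_pos w (up_pos w l)" unfolding dec_def by auto
  have "up_pos w (Suc l) < length w" using dyck_up_pos(1)[OF d] lN by auto
  then have sl: "Suc (up_pos w l) < length w" using dd(1) by simp
  have "w ! Suc (up_pos w l)"
  proof (rule ccontr)
    assume "\<not> w ! Suc (up_pos w l)"
    then have "match_pos w (up_pos w l) = Suc (up_pos w l)" using match_pos_next[OF d up(1,2) sl] by simp
    then show False using dd by simp
  qed
  then show "Suc (up_pos w l) < length w \<and> w ! Suc (up_pos w l)" using sl by simp
next
  assume a: "Suc (up_pos w l) < length w \<and> w ! Suc (up_pos w l)"
  have up: "up_pos w l < length w" "w ! up_pos w l" "ups w (up_pos w l) = l - 1" using dyck_up_pos[OF d] l by auto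
  have c: "ups w (Suc (up_pos w l)) = l" using ups_Suc[OF up(1)] up l by simp
  have u2: "up_pos w (Suc l) = Suc (up_pos w l)" using up_pos_eqI[of "Suc (up_pos w l)" w] a c by simp
  have lN: "Suc l \<in> {1..N}"
  proof -
    have "ups w (Suc (Suc (up_pos w l))) \<le> N" by (rule ups_le_dyck[OF d])
    then show ?thesis using ups_Suc[of "Suc (up_pos w l)" w] a c by simp
  qed
  have "stays_above w (up_pos w l) (up_pos w (Suc l))"
    unfolding stays_above_def
  proof (intro allI impI)
    fix k assume "up_pos w l < k \<and> k \<le> up_pos w (Suc l)"
    then have "k = Suc (up_pos w l)" using u2 by simp
    then show "height w k > height w (up_pos w l)" using height_Suc[OF up(1)] up(2) by simp
  qed
  then have "(Suc l, l) \<in> dec N w" using dec_iff_stays_above[OF d] l lN by auto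
  then show "l < arch_end w l" using dec_eq_dec_vec[OF d] unfolding dec_vec_def by auto
qed

lemma runs_div_iff_arch_end:
  assumes d: "dyck N w"
  shows "runs_div m w \<longleftrightarrow> (\<forall>l\<in>{1..N}. \<not> l < arch_end w l \<longrightarrow> m dvd l)"
proof -
  have re: "run_end w (up_pos w l) \<longleftrightarrow> \<not> l < arch_end w l" if l: "l \<in> {1..N}" for l
  proof -
    have "up_pos w l < length w" "w ! up_pos w l" using dyck_up_pos[OF d] l by auto
    then show ?thesis using less_arch_end_iff[OF d l] unfolding run_end_def by auto
  qed
  have cl: "ups w (Suc (up_pos w l)) = l" if l: "l \<in> {1..N}" for l
    using ups_Suc[of "up_pos w l" w] dyck_up_pos[OF d] l by auto
  show ?thesis unfolding runs_div_iff_run_end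
  proof (intro iffI ballI impI allI)
    fix l assume h: "\<forall>p. run_end w p \<longrightarrow> m dvd ups w (Suc p)" and l: "l \<in> {1..N}" and n: "\<not> l < arch_end w l"
    then have "run_end w (up_pos w l)" using re[OF l] by simp
    then have "m dvd ups w (Suc (up_pos w l))" using h by blast
    then show "m dvd l" using cl[OF l] by simp
  next
    fix p assume h: "\<forall>l\<in>{1..N}. \<not> l < arch_end w l \<longrightarrow> m dvd l" and p: "run_end w p"
    have pl: "p < length w" "w ! p" using p unfolding run_end_def by auto
    define l where "l = Suc (ups w p)"
    have up: "up_pos w l = p" unfolding l_def using up_pos_eqI[OF pl] .
    have lN: "l \<in> {1..N}" unfolding l_def using ups_le_dyck[OF d, of "Suc p"] ups_Suc[OF pl(1)] pl(2) by simp
    have "\<not> l < arch_end w l" using re[OF lN] up p by simp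
    then have "m dvd l" using h lN by blast
    then show "m dvd ups w (Suc p)" using cl[OF lN] up by simp
  qed
qed

lemma chain_index_exists:
  assumes m: "m \<ge> 1" and l: "l \<in> {1..n * m}" and nd: "\<not> m dvd l"
  shows "\<exists>i k. i \<in> {1..n} \<and> k + 1 < m \<and> i * m - k = Suc l \<and> i * m - k - 1 = l"
proof -
  define q where "q = l div m"
  define r where "r = l mod m"
  have lq: "l = q * m + r" unfolding q_def r_def by simp
  have r0: "0 < r" "r < m" using nd m unfolding r_def by (auto simp: dvd_eq_mod_eq_0)
  have "l \<noteq> n * m" using nd by auto
  then have "l < n * m" using l by simp
  then have "q * m < n * m" using lq by linarith
  then have qn: "q < n" by simp
  define i where "i = Suc q"
  define k where "k = m - 1 - r"
  have "i * m - k = Suc l" unfolding i_def k_def using lq r0 by (simp add: algebra_simps)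
  moreover have "i \<in> {1..n}" "k + 1 < m" unfolding i_def k_def using qn r0 by auto
  moreover have "i * m - k - 1 = l" using calculation(1) by simp
  ultimately show ?thesis by blast
qed

lemma chain_index_props:
  assumes m: "m \<ge> 1" and i: "i \<in> {1..n}" and k: "k + 1 < m"
  shows "i * m - k = Suc (i * m - k - 1) \<and> i * m - k - 1 \<in> {1..n * m} \<and> \<not> m dvd (i * m - k - 1)"
proof -
  obtain q where q: "i = Suc q" using i by (cases i) auto
  define r where "r = m - k - 1"
  have r: "0 < r" "r < m" unfolding r_def using k by auto
  have e: "i * m - k - 1 = q * m + r" unfolding r_def q using k by (simp add: algebra_simps)
  have "(q * m + r) mod m = r" using r by simp
  then have "\<not> m dvd (q * m + r)" using r by (auto simp: dvd_eq_mod_eq_0)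
  moreover have "q * m + r \<le> n * m"
  proof -
    have "q < n" using i q by simp
    then have "Suc q * m \<le> n * m" by (metis Suc_leI mult_le_mono1)
    then show ?thesis using r by simp
  qed
  moreover have "i * m - k = Suc (i * m - k - 1)" using e r q by simp
  ultimately show ?thesis using e r by simp
qed

lemma chain_cond_iff_Suc:
  assumes m: "m \<ge> 1"
  shows "chain_cond n m R \<longleftrightarrow> (\<forall>l\<in>{1..n * m}. \<not> m dvd l \<longrightarrow> (Suc l, l) \<in> R)"
proof
  assume c: "chain_cond n m R"
  show "\<forall>l\<in>{1..n * m}. \<not> m dvd l \<longrightarrow> (Suc l, l) \<in> R"
  proof (intro ballI impI)
    fix l assume l: "l \<in> {1..n * m}" and nd: "\<not> m dvd l"
    obtain i k where ik: "i \<in> {1..n}" "k + 1 < m" "i * m - k = Suc l" "i * m - k - 1 = l"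
      using chain_index_exists[OF m l nd] by blast
    then have "(i * m - k, i * m - k - 1) \<in> R" using c unfolding chain_cond_def by blast
    then show "(Suc l, l) \<in> R" using ik by simp
  qed
next
  assume h: "\<forall>l\<in>{1..n * m}. \<not> m dvd l \<longrightarrow> (Suc l, l) \<in> R"
  show "chain_cond n m R" unfolding chain_cond_def
  proof (intro ballI allI impI)
    fix i k assume "i \<in> {1..n}" "k + 1 < m"
    note idx = chain_index_props[OF m this]
    then have "(Suc (i * m - k - 1), i * m - k - 1) \<in> R" using h by blast
    then show "(i * m - k, i * m - k - 1) \<in> R" using idx by simp
  qed
qed

lemma chain_cond_IP_vec_iff:
  assumes T: "vec_interval (n * m) E1 E2" and m: "m \<ge> 1"
  shows "chain_cond n m (IP_vec (n * m) E1 E2) \<longleftrightarrow> (\<forall>l\<in>{1..n * m}. \<not> m dvd l \<longrightarrow> l < E1 l)"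
proof -
  interpret vec_interval "n * m" E1 E2 by (rule T)
  have "(Suc l, l) \<in> IP_vec (n * m) E1 E2 \<longleftrightarrow> (Suc l, l) \<in> dec_vec (n * m) E1" for l
    using IP_vec_dec_part by blast
  then have "(Suc l, l) \<in> IP_vec (n * m) E1 E2 \<longleftrightarrow> l \<in> {1..n * m} \<and> l < E1 l" for l
    by (simp add: dec_vec_def Suc_le_eq)
  then show ?thesis unfolding chain_cond_iff_Suc[OF m] by auto
qed

lemma IP_vec_cong:
  assumes "\<forall>i\<in>{1..N}. E1 i = E1' i" and "\<forall>i\<in>{1..N}. E2 i = E2' i"
  shows "IP_vec N E1 E2 = IP_vec N E1' E2'"
proof -
  have "dec_vec N E1 = dec_vec N E1'" unfolding dec_vec_def using assms(1) by auto
  moreover have "inc_base_vec N E2 = inc_base_vec N E2'" unfolding inc_base_vec_def using assms(2) by auto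
  ultimately show ?thesis unfolding IP_vec_def inc_vec_def by simp
qed

lemma IP_eq_IP_vec:
  assumes "dyck N P" "dyck N Q"
  shows "IP N P Q = IP_vec N (arch_end P) (arch_end Q)"
  unfolding IP_def IP_vec_def inc_def inc_vec_def
  using dec_eq_dec_vec[OF assms(1)] inc_base_eq_inc_base_vec[OF assms(2)] by simp

lemma vec_interval_arch_end:
  assumes d: "dyck N P" and t: "tamari_le P Q"
  shows "vec_interval N (arch_end P) (arch_end Q)"
  using arch_end_bracket_vector[OF d] arch_end_bracket_vector tamari_le_arch_end[OF d t]
  by unfold_locales auto

lemma interval_poset_IP:
  assumes d: "dyck N P" and t: "tamari_le P Q"
  shows "interval_poset N (IP N P Q)"
proof -
  interpret vec_interval N "arch_end P" "arch_end Q" using vec_interval_arch_end[OF d t] .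
  show ?thesis using IP_vec_interval_poset IP_eq_IP_vec d tamari_le_arch_end[OF d t] by simp
qed

lemma inj_on_IP: "inj_on (\<lambda>(P, Q). IP N P Q) {(P, Q). dyck N P \<and> tamari_le P Q}"
proof (rule inj_onI, clarify)
  fix P Q P' Q' assume d: "dyck N P" "dyck N P'" and t: "tamari_le P Q" "tamari_le P' Q'"
    and eq: "IP N P Q = IP N P' Q'"
  interpret A: vec_interval N "arch_end P" "arch_end Q" using vec_interval_arch_end[OF d(1) t(1)] .
  interpret B: vec_interval N "arch_end P'" "arch_end Q'" using vec_interval_arch_end[OF d(2) t(2)] .
  have dQ: "dyck N Q" "dyck N Q'" using tamari_le_arch_end[OF d(1) t(1)] tamari_le_arch_end[OF d(2) t(2)] by auto
  have R: "IP_vec N (arch_end P) (arch_end Q) = IP_vec N (arch_end P') (arch_end Q')"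
    using eq IP_eq_IP_vec d dQ by simp
  have "dec_vec N (arch_end P) = dec_vec N (arch_end P')" using A.IP_vec_dec_part B.IP_vec_dec_part R by simp
  then have "\<forall>i\<in>{1..N}. arch_end P i = arch_end P' i"
    using dec_vec_inj[OF arch_end_bracket_vector[OF d(1)] arch_end_bracket_vector[OF d(2)]] by blast
  then have "P = P'" using arch_end_inj[OF d] by blast
  moreover have "inc_vec N (arch_end Q) = inc_vec N (arch_end Q')"
    using A.IP_vec_inc_part B.IP_vec_inc_part R by simp
  then have "\<forall>i\<in>{1..N}. arch_end Q i = arch_end Q' i"
    using inc_vec_inj[OF arch_end_bracket_vector[OF dQ(1)] arch_end_bracket_vector[OF dQ(2)]] by blast
  then have "Q = Q'" using arch_end_inj[OF dQ] by blast
  ultimately show "P = P' \<and> Q = Q'" by simp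
qed

lemma interval_poset_eq_IP:
  assumes ip: "interval_poset N R"
  obtains P Q where "dyck N P" "tamari_le P Q" "R = IP N P Q"
proof -
  interpret tamari_interval_poset N R using ip by unfold_locales
  interpret vec_interval N "dec_end N R" "inc_end N R" by (rule vec_interval)
  obtain P where P: "tamari_le (zigzag N) P" "dyck N P" "\<forall>i\<in>{1..N}. arch_end P i = dec_end N R i"
    using tamari_climb_to[OF v1 dyck_zigzag] arch_end_zigzag bracket_vectorD(1)[OF v1] by fastforce
  obtain Q where Q: "tamari_le P Q" "dyck N Q" "\<forall>i\<in>{1..N}. arch_end Q i = inc_end N R i"
    using tamari_climb_to[OF v2 P(2)] P(3) le12 by fastforce
  have "IP N P Q = R"
    using IP_eq_IP_vec[OF P(2) Q(2)] IP_vec_cong[OF P(3) Q(3)] eq_IP_vec by simp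
  then show ?thesis using that P(2) Q(1) by blast
qed

lemma mpaths_iff_arch_end:
  "P \<in> mpaths n m \<longleftrightarrow> dyck (n * m) P \<and> (\<forall>l\<in>{1..n * m}. \<not> l < arch_end P l \<longrightarrow> m dvd l)"
  unfolding mpaths_def using runs_div_iff_arch_end by blast

lemma mpaths_upward_closed:
  assumes P: "P \<in> mpaths n m" and t: "tamari_le P Q"
  shows "Q \<in> mpaths n m"
proof -
  have d: "dyck (n * m) P" using P mpaths_iff_arch_end by blast
  have "dyck (n * m) Q" "\<forall>l\<in>{1..n * m}. arch_end P l \<le> arch_end Q l" using tamari_le_arch_end[OF d t] by auto
  then show ?thesis using P mpaths_iff_arch_end by fastforce
qed

lemma chain_cond_IP_iff:
  assumes m: "m \<ge> 1" and d: "dyck (n * m) P" and t: "tamari_le P Q"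
  shows "chain_cond n m (IP (n * m) P Q) \<longleftrightarrow> P \<in> mpaths n m"
  using chain_cond_IP_vec_iff[OF vec_interval_arch_end[OF d t] m] IP_eq_IP_vec[OF d] tamari_le_arch_end[OF d t]
    mpaths_iff_arch_end d by auto

theorem theorem4p6:
  fixes n m :: nat
  assumes "n \<ge> 1" and "m \<ge> 1"
  shows "bij_betw (\<lambda>(P, Q). IP (n * m) P Q)
           {(P, Q). P \<in> mpaths n m \<and> Q \<in> mpaths n m \<and> tamari_le P Q}
           {R. interval_poset (n * m) R \<and> chain_cond n m R}"
proof -
  have dom: "{(P, Q). P \<in> mpaths n m \<and> Q \<in> mpaths n m \<and> tamari_le P Q} =
      {(P, Q). P \<in> mpaths n m \<and> tamari_le P Q}"
    using mpaths_upward_closed by blast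
  have "{(P, Q). P \<in> mpaths n m \<and> tamari_le P Q} \<subseteq> {(P, Q). dyck (n * m) P \<and> tamari_le P Q}"
    using mpaths_iff_arch_end by blast
  then have "inj_on (\<lambda>(P, Q). IP (n * m) P Q) {(P, Q). P \<in> mpaths n m \<and> tamari_le P Q}"
    using inj_on_IP inj_on_subset by blast
  moreover have "(\<lambda>(P, Q). IP (n * m) P Q) ` {(P, Q). P \<in> mpaths n m \<and> tamari_le P Q} =
      {R. interval_poset (n * m) R \<and> chain_cond n m R}"
  proof (intro set_eqI iffI)
    fix R assume "R \<in> (\<lambda>(P, Q). IP (n * m) P Q) ` {(P, Q). P \<in> mpaths n m \<and> tamari_le P Q}"
    then show "R \<in> {R. interval_poset (n * m) R \<and> chain_cond n m R}"
      using interval_poset_IP chain_cond_IP_iff[OF assms(2)] mpaths_iff_arch_end by fastforce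
  next
    fix R assume "R \<in> {R. interval_poset (n * m) R \<and> chain_cond n m R}"
    moreover obtain P Q where "dyck (n * m) P" "tamari_le P Q" "R = IP (n * m) P Q"
      using interval_poset_eq_IP calculation by blast
    ultimately show "R \<in> (\<lambda>(P, Q). IP (n * m) P Q) ` {(P, Q). P \<in> mpaths n m \<and> tamari_le P Q}"
      using chain_cond_IP_iff[OF assms(2)] by blast
  qed
  ultimately show ?thesis unfolding bij_betw_def dom by blast
qed

end
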